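(* Let $N\ge2$, let $\Omega\subset\mathbb{R}^N$ be a bounded domain, let $F,Q$ be as in the context, and let $\lambda_1=\min_{u\in W_0^{1,2}(\Omega)\setminus\{0\}}\frac{\int_\Omega F^2(\nabla u)\,dx}{\int_\Omega u^2\,dx}$ be the first eigenvalue of the Finsler Laplacian on $\Omega$ with Dirichlet boundary condition. If $\lambda>\lambda_1$, then the problem $-Qu=\lambda e^u$ in $\Omega$, $u=0$ on $\partial\Omega$ has no (weak) solution $u\in W_0^{1,2}(\Omega)$.
   Context: Standing assumptions on $F$: $F:\mathbb{R}^N\to[0,\infty)$ is convex, $F\in C^2(\mathbb{R}^N\setminus\{0\})$, $F(t\xi)=|t|F(\xi)$ for all $t\in\mathbb{R}$, $\xi\in\mathbb{R}^N$, $F(\xi)>0$ for $\xi\neq 0$; there are constants $0<a\le b<\infty$ with $a|\xi|\le F(\xi)\le b|\xi|$, and constants $0<\mu\le\Lambda<\infty$ with $\mu^2|V|^2\le\sum_{i,j}F_{\xi_i\xi_j}(\xi)V_iV_j\le\Lambda|V|^2$ for all $\xi$ with $|\xi|=1$ and all $V\perp\xi$. $Qu:=\sum_{i=1}^N\partial_{x_i}\big(F(\nabla u)F_{\xi_i}(\nabla u)\big)$. A weak solution is $u\in W_0^{1,2}(\Omega)$ with $e^u\in L^1_{loc}(\Omega)$ and $\int_\Omega F(\nabla u)F_\xi(\nabla u)\cdot\nabla\phi\,dx=\lambda\int_\Omega e^u\phi\,dx$ for all $\phi\in C_c^\infty(\Omega)$. *)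

theory Defs
  imports "HOL-Analysis.Analysis"
begin

(* Euclidean space R^N is modelled as real^'n, N = CARD('n). *)

definition pd :: "'n::finite \<Rightarrow> (real^'n \<Rightarrow> real) \<Rightarrow> real^'n \<Rightarrow> real" where
  "pd i f x = frechet_derivative f (at x) (axis i 1)"

definition grad :: "(real^'n::finite \<Rightarrow> real) \<Rightarrow> real^'n \<Rightarrow> real^'n" where
  "grad f x = (\<chi> i. pd i f x)"

fun iter_pd :: "'n::finite list \<Rightarrow> (real^'n \<Rightarrow> real) \<Rightarrow> real^'n \<Rightarrow> real" where
  "iter_pd [] f = f"
| "iter_pd (i # is) f = pd i (iter_pd is f)"

definition smooth :: "(real^'n::finite \<Rightarrow> real) \<Rightarrow> bool" where
  "smooth f \<longleftrightarrow> (\<forall>is x. iter_pd is f differentiable (at x))"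

definition test_fun :: "(real^'n::finite) set \<Rightarrow> (real^'n \<Rightarrow> real) \<Rightarrow> bool" where
  "test_fun \<Omega> \<phi> \<longleftrightarrow> smooth \<phi> \<and> compact (closure {x. \<phi> x \<noteq> 0})
      \<and> closure {x. \<phi> x \<noteq> 0} \<subseteq> \<Omega>"

text \<open>u belongs to W_0^{1,2}(Omega) with (weak) gradient g: u, g are in L^2(Omega) and
  (u, g) is the L^2-limit of (phi_k, grad phi_k) for test functions phi_k
  (i.e. W_0^{1,2} is the closure of C_c^infinity(Omega) in the W^{1,2} norm).\<close>
definition W012 :: "(real^'n::finite) set \<Rightarrow> (real^'n \<Rightarrow> real) \<Rightarrow> (real^'n \<Rightarrow> real^'n) \<Rightarrow> bool" where
  "W012 \<Omega> u g \<longleftrightarrow>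
     set_borel_measurable lebesgue \<Omega> u \<and> set_integrable lebesgue \<Omega> (\<lambda>x. (u x)\<^sup>2) \<and>
     set_borel_measurable lebesgue \<Omega> g \<and> set_integrable lebesgue \<Omega> (\<lambda>x. (norm (g x))\<^sup>2) \<and>
     (\<exists>\<phi> :: nat \<Rightarrow> real^'n \<Rightarrow> real. (\<forall>k. test_fun \<Omega> (\<phi> k)) \<and>
        (\<lambda>k. LINT x:\<Omega>|lebesgue. (\<phi> k x - u x)\<^sup>2) \<longlonglongrightarrow> 0 \<and>
        (\<lambda>k. LINT x:\<Omega>|lebesgue. (norm (grad (\<phi> k) x - g x))\<^sup>2) \<longlonglongrightarrow> 0)"

definition hess :: "(real^'n::finite \<Rightarrow> real) \<Rightarrow> real^'n \<Rightarrow> 'n \<Rightarrow> 'n \<Rightarrow> real" where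
  "hess F \<xi> i j = pd j (pd i F) \<xi>"

definition finsler_admissible :: "(real^'n::finite \<Rightarrow> real) \<Rightarrow> bool" where
  "finsler_admissible F \<longleftrightarrow>
     (\<forall>\<xi>. F \<xi> \<ge> 0) \<and> convex_on UNIV F \<and>
     \<comment> \<open>F in C^2(R^N minus 0)\<close>
     (\<forall>\<xi>. \<xi> \<noteq> 0 \<longrightarrow> F differentiable (at \<xi>)) \<and>
     (\<forall>i \<xi>. \<xi> \<noteq> 0 \<longrightarrow> pd i F differentiable (at \<xi>)) \<and>
     (\<forall>i j. continuous_on (UNIV - {0}) (\<lambda>\<xi>. hess F \<xi> i j)) \<and>
     (\<forall>t \<xi>. F (t *\<^sub>R \<xi>) = \<bar>t\<bar> * F \<xi>) \<and>
     (\<forall>\<xi>. \<xi> \<noteq> 0 \<longrightarrow> F \<xi> > 0) \<and>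
     (\<exists>a b. 0 < a \<and> a \<le> b \<and> (\<forall>\<xi>. a * norm \<xi> \<le> F \<xi> \<and> F \<xi> \<le> b * norm \<xi>)) \<and>
     (\<exists>\<mu> \<Lambda>. 0 < \<mu> \<and> \<mu> \<le> \<Lambda> \<and>
        (\<forall>\<xi> V. norm \<xi> = 1 \<longrightarrow> \<xi> \<bullet> V = 0 \<longrightarrow>
           \<mu>\<^sup>2 * (norm V)\<^sup>2 \<le> (\<Sum>i\<in>UNIV. \<Sum>j\<in>UNIV. hess F \<xi> i j * V $ i * V $ j) \<and>
           (\<Sum>i\<in>UNIV. \<Sum>j\<in>UNIV. hess F \<xi> i j * V $ i * V $ j) \<le> \<Lambda> * (norm V)\<^sup>2))"

text \<open>First Dirichlet eigenvalue of the Finsler Laplacian (infimum = minimum of the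
  Rayleigh quotient over nonzero elements of W_0^{1,2}).\<close>
definition lambda1 :: "(real^'n::finite \<Rightarrow> real) \<Rightarrow> (real^'n) set \<Rightarrow> real" where
  "lambda1 F \<Omega> = Inf {(LINT x:\<Omega>|lebesgue. (F (g x))\<^sup>2) / (LINT x:\<Omega>|lebesgue. (u x)\<^sup>2) | u g.
       W012 \<Omega> u g \<and> (LINT x:\<Omega>|lebesgue. (u x)\<^sup>2) \<noteq> 0}"

text \<open>Weak solution of -Qu = lambda e^u in Omega, u = 0 on the boundary.
  F(xi) F_xi(xi) . V is written F xi * DF(xi)(V) with DF the Frechet derivative
  (at xi = 0 the product is 0 since F 0 = 0).\<close>
definition weak_solution :: "(real^'n::finite \<Rightarrow> real) \<Rightarrow> (real^'n) set \<Rightarrow> real \<Rightarrow> (real^'n \<Rightarrow> real) \<Rightarrow> bool" where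
  "weak_solution F \<Omega> lam u \<longleftrightarrow>
     (\<exists>g. W012 \<Omega> u g \<and>
        (\<forall>K. compact K \<and> K \<subseteq> \<Omega> \<longrightarrow> set_integrable lebesgue K (\<lambda>x. exp (u x))) \<and>
        (\<forall>\<phi>. test_fun \<Omega> \<phi> \<longrightarrow>
           (LINT x:\<Omega>|lebesgue. F (g x) * frechet_derivative F (at (g x)) (grad \<phi> x))
             = lam * (LINT x:\<Omega>|lebesgue. exp (u x) * \<phi> x)))"

end

theory Submission
  imports Defs "HOL-Computational_Algebra.Polynomial"
begin

(* The weak form of -Qu = lam e^u is tested twice; since test functions must be smooth, u is
   replaced by the smooth approximants psi_n from the definition of W_0^{1,2}, and one passes to
   the limit along an a.e. convergent subsequence.

   Testing with -f(-psi_n), where f is exp(-1/t) extended by 0, shows that u >= 0 a.e.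

   Testing with v^2 H(psi_n), for a test function v and H(s) = 1/(e^s + c) with c > 0, gives in
   the limit  lam * int e^u H(u) v^2 = int (2 v H(u) F(Du) F_xi(Du).Dv + v^2 H'(u) F(Du)^2).
   Completing the square (Picone's inequality; note H^2/(-H') = e^(-s)) bounds the right-hand
   integrand by e^(-u) F(Dv)^2 <= F(Dv)^2, while e^u H(u) >= 1/(1+c) because u >= 0. Hence
   lam/(1+c) * int v^2 <= int F(Dv)^2; letting c -> 0 and approximating elements of W_0^{1,2}
   by test functions gives lam <= lambda1. *)

section \<open>Smooth functions\<close>

lemma pd_at:
  assumes "(f has_derivative f') (at x)"
  shows "pd i f x = f' (axis i 1)"
  using frechet_derivative_at[OF assms] unfolding pd_def by simp

lemma pd_add:
  assumes "\<And>x. f differentiable (at x)" "\<And>x. g differentiable (at x)"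
  shows "pd i (\<lambda>x. f x + g x) = (\<lambda>x. pd i f x + pd i g x)"
proof
  fix x
  have "(f has_derivative frechet_derivative f (at x)) (at x)"
    and "(g has_derivative frechet_derivative g (at x)) (at x)"
    using assms frechet_derivative_works by blast+
  from pd_at[OF has_derivative_add[OF this]]
  show "pd i (\<lambda>x. f x + g x) x = pd i f x + pd i g x"
    by (simp add: pd_def)
qed

lemma pd_mult:
  assumes "\<And>x. f differentiable (at x)" "\<And>x. g differentiable (at x)"
  shows "pd i (\<lambda>x. f x * g x) = (\<lambda>x. pd i f x * g x + f x * pd i g x)"
proof
  fix x
  have "(f has_derivative frechet_derivative f (at x)) (at x)"
    and "(g has_derivative frechet_derivative g (at x)) (at x)"
    using assms frechet_derivative_works by blast+
  from pd_at[OF has_derivative_mult[OF this]]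
  show "pd i (\<lambda>x. f x * g x) x = pd i f x * g x + f x * pd i g x"
    by (simp add: pd_def algebra_simps)
qed

lemma pd_const: "pd i (\<lambda>x. c) = (\<lambda>x. 0)"
  using pd_at[OF has_derivative_const] by (intro ext) fast

lemma pd_vec_nth:
  fixes j :: "'n::finite"
  shows "pd i (\<lambda>x. x $ j) = (\<lambda>x. if i = j then 1 else 0)"
proof
  fix x :: "real^'n"
  have "((\<lambda>x::real^'n. x $ j) has_derivative (\<lambda>x. x $ j)) (at x)"
    by (simp add: bounded_linear_imp_has_derivative bounded_linear_vec_nth)
  then show "pd i (\<lambda>x. x $ j) x = (if i = j then 1 else 0)"
    by (simp add: pd_at axis_def)
qed

lemma pd_comp:
  assumes "(\<theta> has_real_derivative d) (at (f x))" "f differentiable (at x)"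
  shows "pd i (\<lambda>x. \<theta> (f x)) x = d * pd i f x"
proof -
  have "(f has_derivative frechet_derivative f (at x)) (at x)"
    using assms(2) frechet_derivative_works by blast
  moreover have "(\<theta> has_derivative (*) d) (at (f x))"
    using assms(1) by (simp add: has_field_derivative_def)
  ultimately show ?thesis
    using pd_at[OF diff_chain_at, unfolded o_def] by (simp add: pd_def)
qed

text \<open>An order-indexed characterisation of \<open>smooth\<close>, so that its closure properties can be
  proved by induction on the order.\<close>

fun smooth_upto :: "nat \<Rightarrow> (real^'n::finite \<Rightarrow> real) \<Rightarrow> bool" where
  "smooth_upto 0 f \<longleftrightarrow> (\<forall>x. f differentiable (at x))"
| "smooth_upto (Suc n) f \<longleftrightarrow> (\<forall>x. f differentiable (at x)) \<and> (\<forall>i. smooth_upto n (pd i f))"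

lemma smooth_upto_differentiable: "smooth_upto n f \<Longrightarrow> f differentiable (at x)"
  by (cases n) auto

lemma smooth_upto_Suc_imp: "smooth_upto (Suc n) f \<Longrightarrow> smooth_upto n f"
  by (induction n arbitrary: f) auto

lemma iter_pd_append: "iter_pd (is @ [i]) f = iter_pd is (pd i f)"
  by (induction "is") auto

lemma smooth_iff_smooth_upto: "smooth f \<longleftrightarrow> (\<forall>n. smooth_upto n f)"
proof -
  have "smooth_upto n f" if "\<forall>is x. iter_pd is f differentiable (at x)" for n f
    using that
  proof (induction n arbitrary: f)
    case 0
    then show ?case using 0[rule_format, of "[]"] by simp
  next
    case (Suc n)
    have "smooth_upto n (pd i f)" for i
      using Suc.IH[of "pd i f"] Suc.prems by (metis iter_pd_append)
    then show ?case using Suc.prems[rule_format, of "[]"] by simp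
  qed
  moreover have "iter_pd is f differentiable (at x)" if "\<forall>n. smooth_upto n f" for "is" f x
    using that
  proof (induction "is" arbitrary: f rule: rev_induct)
    case Nil
    then show ?case by (auto intro: smooth_upto_differentiable)
  next
    case (snoc i "is")
    then have "\<forall>n. smooth_upto n (pd i f)"
      by (metis smooth_upto.simps(2))
    then show ?case using snoc.IH by (simp add: iter_pd_append)
  qed
  ultimately show ?thesis unfolding smooth_def by blast
qed

lemma smooth_upto_const: "smooth_upto n (\<lambda>x. c)"
  by (induction n arbitrary: c) (auto simp: pd_const)

lemma smooth_upto_vec_nth: "smooth_upto n (\<lambda>x. x $ j)"
  by (cases n) (auto simp: pd_vec_nth smooth_upto_const bounded_linear_vec_nth
      bounded_linear_imp_differentiable)

lemma smooth_upto_add: "smooth_upto n f \<Longrightarrow> smooth_upto n g \<Longrightarrow> smooth_upto n (\<lambda>x. f x + g x)"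
  by (induction n arbitrary: f g) (auto simp: pd_add)

lemma smooth_upto_mult: "smooth_upto n f \<Longrightarrow> smooth_upto n g \<Longrightarrow> smooth_upto n (\<lambda>x. f x * g x)"
proof (induction n arbitrary: f g)
  case (Suc n)
  have "smooth_upto n (\<lambda>x. pd i f x * g x + f x * pd i g x)" for i
    using Suc by (intro smooth_upto_add Suc.IH) (auto intro: smooth_upto_Suc_imp)
  then show ?case using Suc.prems by (simp add: pd_mult)
qed auto

lemma smooth_upto_sum:
  "finite S \<Longrightarrow> (\<And>i. i \<in> S \<Longrightarrow> smooth_upto n (f i)) \<Longrightarrow> smooth_upto n (\<lambda>x. \<Sum>i\<in>S. f i x)"
  by (induction S rule: finite_induct) (auto simp: smooth_upto_const smooth_upto_add)

lemma smooth_upto_inverse: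
  "smooth_upto n f \<Longrightarrow> (\<And>x. f x \<noteq> 0) \<Longrightarrow> smooth_upto n (\<lambda>x. 1 / f x)"
proof (induction n)
  case 0
  then show ?case by (simp add: differentiable_divide)
next
  case (Suc n)
  have "pd i (\<lambda>x. 1 / f x) = (\<lambda>x. (- pd i f x) * (1 / f x) * (1 / f x))" for i
  proof
    fix x
    have "((\<lambda>s. 1 / s) has_real_derivative - 1 / (f x * f x)) (at (f x))"
      using Suc.prems(2)[of x] by (auto intro!: derivative_eq_intros simp: power2_eq_square)
    with Suc.prems show "pd i (\<lambda>x. 1 / f x) x = (- pd i f x) * (1 / f x) * (1 / f x)"
      by (simp add: pd_comp smooth_upto_differentiable)
  qed
  moreover have "smooth_upto n (\<lambda>x. (- pd i f x) * (1 / f x) * (1 / f x))" for i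
  proof -
    have "smooth_upto n (\<lambda>x. (-1) * pd i f x)"
      using Suc.prems by (intro smooth_upto_mult smooth_upto_const) auto
    then have "smooth_upto n (\<lambda>x. - pd i f x)"
      by simp
    moreover have "smooth_upto n (\<lambda>x. 1 / f x)"
      using Suc smooth_upto_Suc_imp by blast
    ultimately show ?thesis
      by (intro smooth_upto_mult)
  qed
  ultimately show ?case using Suc.prems by (simp only: smooth_upto.simps) (simp add: differentiable_divide)
qed

definition derivative_seq :: "(nat \<Rightarrow> real \<Rightarrow> real) \<Rightarrow> bool" where
  "derivative_seq ds \<longleftrightarrow> (\<forall>m s. (ds m has_real_derivative ds (Suc m) s) (at s))"

lemma derivative_seq_comp_differentiable:
  assumes "derivative_seq ds" "f differentiable (at x)"
  shows "(\<lambda>x. ds m (f x)) differentiable (at x)"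
proof -
  have "ds m differentiable (at (f x))"
    using assms(1) unfolding derivative_seq_def
    by (meson differentiableI has_field_derivative_imp_has_derivative)
  from differentiable_chain_at[OF assms(2) this] show ?thesis
    by (simp add: o_def)
qed

lemma smooth_upto_comp:
  assumes ds: "derivative_seq ds"
  shows "smooth_upto n f \<Longrightarrow> smooth_upto n (\<lambda>x. ds m (f x))"
proof (induction n arbitrary: m f)
  case 0
  then show ?case by (simp add: derivative_seq_comp_differentiable[OF ds])
next
  case (Suc n)
  have "pd i (\<lambda>x. ds m (f x)) = (\<lambda>x. ds (Suc m) (f x) * pd i f x)" for i
    using Suc.prems ds by (intro ext pd_comp) (auto simp: derivative_seq_def)
  moreover have "smooth_upto n (\<lambda>x. ds (Suc m) (f x) * pd i f x)" for i
    using Suc.IH Suc.prems smooth_upto_Suc_imp by (metis smooth_upto.simps(2) smooth_upto_mult)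
  moreover have "(\<lambda>x. ds m (f x)) differentiable (at x)" for x
    using Suc.prems by (simp add: derivative_seq_comp_differentiable[OF ds])
  ultimately show ?case
    by simp
qed

lemma smooth_const: "smooth (\<lambda>x. c)"
  by (simp add: smooth_iff_smooth_upto smooth_upto_const)

lemma smooth_vec_nth: "smooth (\<lambda>x. x $ j)"
  by (simp add: smooth_iff_smooth_upto smooth_upto_vec_nth)

lemma smooth_add: "smooth f \<Longrightarrow> smooth g \<Longrightarrow> smooth (\<lambda>x. f x + g x)"
  by (simp add: smooth_iff_smooth_upto smooth_upto_add)

lemma smooth_mult: "smooth f \<Longrightarrow> smooth g \<Longrightarrow> smooth (\<lambda>x. f x * g x)"
  by (simp add: smooth_iff_smooth_upto smooth_upto_mult)

lemma smooth_sum: "finite S \<Longrightarrow> (\<And>i. i \<in> S \<Longrightarrow> smooth (f i)) \<Longrightarrow> smooth (\<lambda>x. \<Sum>i\<in>S. f i x)"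
  by (simp add: smooth_iff_smooth_upto smooth_upto_sum)

lemma smooth_inverse: "smooth f \<Longrightarrow> (\<And>x. f x \<noteq> 0) \<Longrightarrow> smooth (\<lambda>x. 1 / f x)"
  by (simp add: smooth_iff_smooth_upto smooth_upto_inverse)

lemma smooth_comp: "derivative_seq ds \<Longrightarrow> smooth f \<Longrightarrow> smooth (\<lambda>x. ds m (f x))"
  by (simp add: smooth_iff_smooth_upto smooth_upto_comp)

lemma smooth_exp: "smooth f \<Longrightarrow> smooth (\<lambda>x. exp (f x))"
  using smooth_comp[of "\<lambda>m. exp"] by (simp add: derivative_seq_def DERIV_exp)

lemma smooth_differentiable: "smooth f \<Longrightarrow> f differentiable (at x)"
  by (simp add: smooth_iff_smooth_upto smooth_upto_differentiable)

lemma smooth_pd: "smooth f \<Longrightarrow> smooth (pd i f)"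
  by (simp add: smooth_def iter_pd_append[symmetric])

section \<open>A smooth function that is flat at zero\<close>

text \<open>\<open>flat n\<close> is the \<open>n\<close>-th derivative of the smooth function equal to \<open>exp (-1/t)\<close> for
  \<open>t > 0\<close> and to \<open>0\<close> for \<open>t \<le> 0\<close>; the recursion for \<open>flat_poly\<close> comes from differentiating
  \<open>p(1/t) exp (-1/t)\<close>.\<close>

fun flat_poly :: "nat \<Rightarrow> real poly" where
  "flat_poly 0 = 1"
| "flat_poly (Suc n) = [:0, 0, 1:] * (flat_poly n - pderiv (flat_poly n))"

definition flat :: "nat \<Rightarrow> real \<Rightarrow> real" where
  "flat n t = (if t > 0 then poly (flat_poly n) (1/t) * exp (-(1/t)) else 0)"

lemma tendsto_poly_exp_at_right_0:
  "((\<lambda>t. poly p (1/t) * exp (-(1/t))) \<longlongrightarrow> (0::real)) (at_right 0)"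
proof -
  have "poly p y * exp (-y) = (\<Sum>i\<le>degree p. coeff p i * (y ^ i / exp y))" for y
    by (simp add: poly_altdef sum_distrib_right exp_minus divide_inverse mult.assoc)
  moreover have "((\<lambda>y. \<Sum>i\<le>degree p. coeff p i * (y ^ i / exp y)) \<longlongrightarrow> (\<Sum>i\<le>degree p. coeff p i * 0)) at_top"
    by (intro tendsto_sum tendsto_mult tendsto_const tendsto_power_div_exp_0)
  ultimately have "((\<lambda>y. poly p y * exp (-y)) \<longlongrightarrow> 0) at_top"
    by simp
  from filterlim_compose[OF this filterlim_inverse_at_top_right] show ?thesis
    by (simp add: o_def inverse_eq_divide)
qed

lemma has_real_derivative_poly_exp:
  assumes "t > 0"
  shows "((\<lambda>t. poly p (1/t) * exp (-(1/t))) has_real_derivative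
           poly ([:0, 0, 1:] * (p - pderiv p)) (1/t) * exp (-(1/t))) (at t)"
proof -
  have inv: "((\<lambda>t. 1/t) has_real_derivative (-(1/t^2))) (at t)"
    using assms by (auto intro!: derivative_eq_intros simp: power2_eq_square)
  have "((\<lambda>t. poly p (1/t)) has_real_derivative poly (pderiv p) (1/t) * (-(1/t^2))) (at t)"
    using DERIV_chain2[OF poly_DERIV inv] .
  moreover have "((\<lambda>t. exp (-(1/t))) has_real_derivative exp (-(1/t)) * (1/t^2)) (at t)"
    using DERIV_chain2[OF DERIV_exp DERIV_minus[OF inv]] by simp
  ultimately show ?thesis
    by (rule DERIV_cong[OF DERIV_mult]) (simp add: algebra_simps power2_eq_square)
qed

lemma flat_has_real_derivative: "(flat n has_real_derivative flat (Suc n) t) (at t)"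
proof (cases t "0::real" rule: linorder_cases)
  case greater
  then show ?thesis
    using has_field_derivative_transform_within_open
      [OF has_real_derivative_poly_exp[OF greater, of "flat_poly n"], of "{0<..}" "flat n"]
    by (simp add: flat_def)
next
  case less
  have "((\<lambda>x. 0) has_real_derivative 0) (at t)"
    by simp
  from has_field_derivative_transform_within_open[OF this, of "{..<0}" "flat n"] less
  show ?thesis
    by (simp add: flat_def)
next
  case equal
  have "((\<lambda>h. (flat n h - flat n 0) / h) \<longlongrightarrow> 0) (at_left 0)"
    by (rule Lim_transform_eventually[OF tendsto_const])
      (auto simp: eventually_at_left_field flat_def intro: exI[of _ "-1"])
  moreover have "((\<lambda>h. (flat n h - flat n 0) / h) \<longlongrightarrow> 0) (at_right 0)"
    by (rule Lim_transform_eventually[OF tendsto_poly_exp_at_right_0[of "[:0, 1:] * flat_poly n"]])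
      (auto simp: eventually_at_right_field flat_def field_simps intro!: exI[of _ 1])
  ultimately have "((\<lambda>h. (flat n h - flat n 0) / h) \<longlongrightarrow> 0) (at 0)"
    by (simp add: filterlim_at_split)
  then show ?thesis
    using equal by (simp add: DERIV_def flat_def)
qed

lemma derivative_seq_flat: "derivative_seq flat"
  unfolding derivative_seq_def using flat_has_real_derivative by blast

lemma continuous_on_flat: "continuous_on UNIV (flat n)"
  using flat_has_real_derivative by (meson DERIV_continuous continuous_at_imp_continuous_on)

lemma flat_0_pos_iff: "flat 0 t > 0 \<longleftrightarrow> t > 0"
  by (simp add: flat_def)

lemma flat_0_bounds: "0 \<le> flat 0 t" "flat 0 t \<le> 1"
  by (simp_all add: flat_def)

lemma flat_1_bounds: "0 \<le> flat 1 t" "flat 1 t \<le> 4"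
proof -
  have "(1/t)^2 * exp (-(1/t)) \<le> 4" if "t > 0"
  proof -
    have "1/(2*t) \<le> exp (1/(2*t))"
      using exp_ge_add_one_self[of "1/(2*t)"] by linarith
    then have "(1/(2*t))^2 \<le> (exp (1/(2*t)))^2"
      using that by (intro power_mono) auto
    then have "(1/t)^2 \<le> 4 * exp (1/t)"
      by (simp add: power2_eq_square exp_add[symmetric] field_simps)
    then have "(1/t)^2 * exp (-(1/t)) \<le> 4 * exp (1/t) * exp (-(1/t))"
      by (intro mult_right_mono) auto
    also have "\<dots> = 4"
      by (simp add: exp_minus)
    finally show ?thesis .
  qed
  then show "0 \<le> flat 1 t" "flat 1 t \<le> 4"
    by (auto simp: flat_def power2_eq_square)
qed

lemma smooth_flat_0: "smooth f \<Longrightarrow> smooth (\<lambda>x. flat 0 (f x))"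
  by (rule smooth_comp[OF derivative_seq_flat])

lemma borel_measurable_flat [measurable]: "flat n \<in> borel_measurable borel"
  using borel_measurable_continuous_onI[OF continuous_on_flat] .

lemma frechet_derivative_eq_grad:
  fixes f :: "real^'n::finite \<Rightarrow> real"
  assumes "f differentiable (at x)"
  shows "frechet_derivative f (at x) w = grad f x \<bullet> w"
proof -
  let ?L = "frechet_derivative f (at x)"
  have L: "linear ?L"
    using assms frechet_derivative_works has_derivative_linear by blast
  have "?L w = ?L (\<Sum>i\<in>UNIV. w $ i *\<^sub>R axis i 1)"
    using basis_expansion[of w] by (simp add: scalar_mult_eq_scaleR)
  also have "\<dots> = (\<Sum>i\<in>UNIV. w $ i * pd i f x)"
    by (simp add: linear_sum[OF L] linear_scale[OF L] pd_def)
  also have "\<dots> = grad f x \<bullet> w"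
    unfolding grad_def inner_vec_def by (simp add: mult.commute)
  finally show ?thesis .
qed

lemma grad_mult:
  assumes "\<And>x. f differentiable (at x)" "\<And>x. g differentiable (at x)"
  shows "grad (\<lambda>x. f x * g x) x = f x *\<^sub>R grad g x + g x *\<^sub>R grad f x"
  using assms by (simp add: grad_def pd_mult vec_eq_iff algebra_simps)

lemma grad_comp:
  assumes "(\<theta> has_real_derivative d) (at (f x))" "f differentiable (at x)"
  shows "grad (\<lambda>x. \<theta> (f x)) x = d *\<^sub>R grad f x"
  using pd_comp[OF assms] by (simp add: grad_def vec_eq_iff)

lemma continuous_on_smooth: "smooth f \<Longrightarrow> continuous_on UNIV f"
  by (meson continuous_at_imp_continuous_on differentiable_imp_continuous_within smooth_differentiable)

lemma continuous_on_grad_smooth: "smooth f \<Longrightarrow> continuous_on UNIV (grad f)"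
  unfolding grad_def by (intro continuous_on_vec_lambda continuous_on_smooth smooth_pd)

lemma not_in_closure_support: "x \<notin> closure {x. f x \<noteq> 0} \<Longrightarrow> f x = 0"
  using closure_subset[of "{x. f x \<noteq> 0}"] by blast

lemma grad_outside_closure_support:
  assumes "x \<notin> closure {x. f x \<noteq> 0}"
  shows "grad f x = 0"
proof -
  let ?S = "- closure {x. f x \<noteq> 0}"
  have "((\<lambda>x. 0) has_derivative (\<lambda>_. 0)) (at x)" "open ?S" "x \<in> ?S"
    using assms by auto
  moreover have "\<And>y. y \<in> ?S \<Longrightarrow> 0 = f y"
    using not_in_closure_support by fastforce
  ultimately have "(f has_derivative (\<lambda>_. 0)) (at x)"
    by (rule has_derivative_transform_within_open)
  then show ?thesis
    by (simp add: grad_def pd_at vec_eq_iff)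
qed

lemma bounded_compact_support:
  fixes f :: "'a::topological_space \<Rightarrow> 'b::real_normed_vector"
  assumes "continuous_on UNIV f" "compact K" "\<And>x. x \<notin> K \<Longrightarrow> f x = 0"
  obtains B where "\<And>x. norm (f x) \<le> B"
proof -
  have "compact (f ` K)"
    using assms by (meson compact_continuous_image continuous_on_subset subset_UNIV)
  then obtain B where "\<forall>y\<in>f ` K. norm y \<le> B"
    by (meson bounded_iff compact_imp_bounded)
  then have "norm (f x) \<le> max B 0" for x
    using assms(3) by (cases "x \<in> K") force+
  then show thesis ..
qed

lemma test_fun_bounded:
  assumes "test_fun \<Omega> \<phi>"
  obtains B where "\<And>x. \<bar>\<phi> x\<bar> \<le> B"
  using assms continuous_on_smooth not_in_closure_support unfolding test_fun_def
  by (metis real_norm_def bounded_compact_support)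

lemma test_fun_grad_bounded:
  assumes "test_fun \<Omega> \<phi>"
  obtains B where "\<And>x. norm (grad \<phi> x) \<le> B"
  using assms continuous_on_grad_smooth grad_outside_closure_support unfolding test_fun_def
  by (metis bounded_compact_support)

lemma test_fun_support_subset:
  assumes "test_fun \<Omega> v" "smooth w" "{x. w x \<noteq> 0} \<subseteq> {x. v x \<noteq> 0}"
  shows "test_fun \<Omega> w"
proof -
  have "closure {x. w x \<noteq> 0} \<subseteq> closure {x. v x \<noteq> 0}"
    using assms(3) by (rule closure_mono)
  moreover have "bounded {x. w x \<noteq> 0}"
    using assms(1,3) bounded_subset unfolding test_fun_def by (metis bounded_closure_image compact_closure)
  ultimately show ?thesis
    using assms unfolding test_fun_def by auto
qed

lemma test_fun_mult:
  assumes "test_fun \<Omega> v" "smooth w"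
  shows "test_fun \<Omega> (\<lambda>x. v x * w x)"
  by (rule test_fun_support_subset[OF assms(1)]) (use assms in \<open>auto simp: test_fun_def smooth_mult\<close>)

lemma test_fun_flat_neg:
  assumes "test_fun \<Omega> \<phi>"
  shows "test_fun \<Omega> (\<lambda>x. - flat 0 (- \<phi> x))"
proof (rule test_fun_support_subset[OF assms])
  have "smooth (\<lambda>x. (-1) * flat 0 ((-1) * \<phi> x))"
    using assms by (intro smooth_mult smooth_const smooth_flat_0) (simp add: test_fun_def)
  then show "smooth (\<lambda>x. - flat 0 (- \<phi> x))"
    by simp
qed (auto simp: flat_def)

lemma grad_flat_neg:
  assumes "smooth \<phi>"
  shows "grad (\<lambda>x. - flat 0 (- \<phi> x)) x = flat 1 (- \<phi> x) *\<^sub>R grad \<phi> x"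
proof -
  have "((\<lambda>s. - flat 0 (- s)) has_real_derivative flat 1 (- \<phi> x)) (at (\<phi> x))"
    by (auto intro!: derivative_eq_intros DERIV_chain2[OF flat_has_real_derivative])
  then show ?thesis
    using grad_comp smooth_differentiable[OF assms] by blast
qed

definition bump :: "real^'n::finite \<Rightarrow> real \<Rightarrow> real^'n \<Rightarrow> real" where
  "bump x0 r x = flat 0 (r\<^sup>2 - (norm (x - x0))\<^sup>2)"

lemma smooth_bump: "smooth (bump x0 r)"
proof -
  have "(norm (x - x0))\<^sup>2 = (\<Sum>j\<in>UNIV. (x $ j + (- x0 $ j)) * (x $ j + (- x0 $ j)))" for x
    by (simp add: power2_norm_eq_inner inner_vec_def)
  moreover have "smooth (\<lambda>x. flat 0 (r\<^sup>2 + (-1) * (\<Sum>j\<in>UNIV. (x $ j + (- x0 $ j)) * (x $ j + (- x0 $ j)))))"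
    by (intro smooth_flat_0 smooth_add smooth_mult smooth_sum smooth_vec_nth smooth_const) auto
  ultimately show ?thesis
    unfolding bump_def[abs_def] by simp
qed

lemma bump_support:
  assumes "0 < r"
  shows "{x. bump x0 r x \<noteq> 0} = ball x0 r"
proof -
  have "flat 0 t \<noteq> 0 \<longleftrightarrow> t > 0" for t
    using flat_0_pos_iff[of t] flat_0_bounds(1)[of t] by linarith
  then have "bump x0 r x \<noteq> 0 \<longleftrightarrow> (norm (x - x0))\<^sup>2 < r\<^sup>2" for x
    by (simp add: bump_def)
  moreover have "(norm (x - x0))\<^sup>2 < r\<^sup>2 \<longleftrightarrow> norm (x - x0) < r" for x
    using assms power2_less_imp_less[of "norm (x - x0)" r] power_strict_mono[of "norm (x - x0)" r 2]
    by auto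
  ultimately show ?thesis
    by (auto simp: dist_norm norm_minus_commute)
qed

lemma test_fun_bump: "0 < r \<Longrightarrow> cball x0 r \<subseteq> \<Omega> \<Longrightarrow> test_fun \<Omega> (bump x0 r)"
  by (simp add: test_fun_def bump_support smooth_bump)

section \<open>Finsler norms\<close>

locale finsler_norm =
  fixes F :: "'a::real_normed_vector \<Rightarrow> real"
  assumes convex: "convex_on UNIV F"
    and homogeneous: "\<And>t \<xi>. F (t *\<^sub>R \<xi>) = \<bar>t\<bar> * F \<xi>"
begin

lemma zero [simp]: "F 0 = 0"
  using homogeneous[of 0 0] by simp

lemma minus [simp]: "F (- \<xi>) = F \<xi>"
  using homogeneous[of "-1" \<xi>] by simp

lemma triangle: "F (\<xi> + \<eta>) \<le> F \<xi> + F \<eta>"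
proof -
  have "F ((1 - 1/2) *\<^sub>R \<xi> + (1/2) *\<^sub>R \<eta>) \<le> (1 - 1/2) * F \<xi> + (1/2) * F \<eta>"
    by (rule convex_onD[OF convex]) auto
  moreover have "F (\<xi> + \<eta>) = 2 * F ((1 - 1/2) *\<^sub>R \<xi> + (1/2) *\<^sub>R \<eta>)"
    using homogeneous[of 2 "(1 - 1/2) *\<^sub>R \<xi> + (1/2) *\<^sub>R \<eta>"] by (simp add: scaleR_add_right)
  ultimately show ?thesis by simp
qed

lemma nonneg: "0 \<le> F \<xi>"
  using triangle[of \<xi> "- \<xi>"] by simp

lemma abs_diff_le: "\<bar>F \<xi> - F \<eta>\<bar> \<le> F (\<xi> - \<eta>)"
  using triangle[of "\<xi> - \<eta>" \<eta>] triangle[of "\<eta> - \<xi>" \<xi>] minus[of "\<eta> - \<xi>"] by simp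

lemma has_real_derivative_line:
  assumes "F differentiable (at \<xi>)"
  shows "((\<lambda>t. F (\<xi> + t *\<^sub>R w)) has_real_derivative frechet_derivative F (at \<xi>) w) (at 0)"
proof -
  let ?L = "frechet_derivative F (at \<xi>)"
  have "(F has_derivative ?L) (at \<xi>)"
    using assms frechet_derivative_works by blast
  then have L: "(F has_derivative ?L) (at ((\<lambda>t::real. \<xi> + t *\<^sub>R w) 0))"
    by simp
  have "((\<lambda>t::real. \<xi> + t *\<^sub>R w) has_derivative (\<lambda>t. t *\<^sub>R w)) (at 0)"
    by (auto intro!: derivative_eq_intros)
  from diff_chain_at[OF this L] have "((\<lambda>t. F (\<xi> + t *\<^sub>R w)) has_derivative (\<lambda>t. ?L (t *\<^sub>R w))) (at 0)"
    by (simp add: o_def)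
  moreover have "(\<lambda>t. ?L (t *\<^sub>R w)) = (*) (?L w)"
    using linear_scale[OF has_derivative_linear[OF L]] by (auto simp: mult.commute)
  ultimately show ?thesis
    unfolding has_field_derivative_def by simp
qed

lemma frechet_derivative_le:
  assumes "F differentiable (at \<xi>)"
  shows "frechet_derivative F (at \<xi>) w \<le> F w"
proof -
  let ?q = "\<lambda>h. (F (\<xi> + (0 + h) *\<^sub>R w) - F (\<xi> + 0 *\<^sub>R w)) / h"
  have "(?q \<longlongrightarrow> frechet_derivative F (at \<xi>) w) (at 0)"
    using has_real_derivative_line[OF assms, of w] by (simp add: DERIV_def)
  then have "(?q \<longlongrightarrow> frechet_derivative F (at \<xi>) w) (at_right 0)"
    by (simp add: filterlim_at_split)
  moreover have "?q h \<le> F w" if "h > 0" for h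
  proof -
    have "F (\<xi> + h *\<^sub>R w) \<le> F \<xi> + h * F w"
      using triangle[of \<xi> "h *\<^sub>R w"] homogeneous[of h w] that by simp
    then show ?thesis
      using that by (simp add: divide_le_eq mult.commute)
  qed
  then have "\<forall>\<^sub>F h in at_right 0. ?q h \<le> F w"
    by (auto simp: eventually_at_right_field intro!: exI[of _ 1])
  ultimately show ?thesis
    by (rule tendsto_upperbound) simp
qed

lemma abs_frechet_derivative_le:
  assumes "F differentiable (at \<xi>)"
  shows "\<bar>frechet_derivative F (at \<xi>) w\<bar> \<le> F w"
proof -
  have "linear (frechet_derivative F (at \<xi>))"
    using assms frechet_derivative_works has_derivative_linear by blast
  then show ?thesis
    using frechet_derivative_le[OF assms, of w] frechet_derivative_le[OF assms, of "- w"]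
    by (simp add: linear_neg)
qed

lemma frechet_derivative_self:
  assumes "F differentiable (at \<xi>)"
  shows "frechet_derivative F (at \<xi>) \<xi> = F \<xi>"
proof -
  have "((\<lambda>t. (1 + t) * F \<xi>) has_real_derivative F \<xi>) (at 0)"
    by (auto intro!: derivative_eq_intros)
  moreover have "open {(-1::real)<..}" "(0::real) \<in> {-1<..}"
    by auto
  moreover have "(1 + t) * F \<xi> = F (\<xi> + t *\<^sub>R \<xi>)" if "t \<in> {-1<..}" for t
  proof -
    have "\<xi> + t *\<^sub>R \<xi> = (1 + t) *\<^sub>R \<xi>"
      by (simp add: algebra_simps)
    then show ?thesis
      using that homogeneous[of "1 + t" \<xi>] by simp
  qed
  ultimately have "((\<lambda>t. F (\<xi> + t *\<^sub>R \<xi>)) has_real_derivative F \<xi>) (at 0)"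
    by (rule has_field_derivative_transform_within_open)
  with has_real_derivative_line[OF assms] show ?thesis
    by (rule DERIV_unique)
qed

end

locale bounded_finsler_norm = finsler_norm F for F :: "'a::euclidean_space \<Rightarrow> real" +
  fixes b :: real
  assumes bound: "\<And>\<xi>. F \<xi> \<le> b * norm \<xi>"
begin

lemma bound_nonneg: "0 \<le> b"
proof -
  obtain e :: 'a where "e \<in> Basis"
    using nonempty_Basis by blast
  then show ?thesis
    using bound[of e] nonneg[of e] by simp
qed

lemma abs_diff_le_bound: "\<bar>F \<xi> - F \<eta>\<bar> \<le> b * norm (\<xi> - \<eta>)"
  using abs_diff_le bound order_trans by blast

lemma power2_diff_le: "(F \<xi> - F \<eta>)\<^sup>2 \<le> b\<^sup>2 * (norm (\<xi> - \<eta>))\<^sup>2"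
proof -
  have "\<bar>F \<xi> - F \<eta>\<bar>\<^sup>2 \<le> (b * norm (\<xi> - \<eta>))\<^sup>2"
    by (rule power_mono[OF abs_diff_le_bound]) simp
  then show ?thesis
    by (simp add: power_mult_distrib)
qed

lemma continuous_on: "continuous_on S F"
  by (rule lipschitz_on_continuous_on[where L=b])
    (auto simp: lipschitz_on_def bound_nonneg abs_diff_le_bound dist_real_def dist_norm)

lemma borel_measurable [measurable]: "F \<in> borel_measurable borel"
  using borel_measurable_continuous_onI[OF continuous_on] .

lemma power2_le: "(F \<xi>)\<^sup>2 \<le> b\<^sup>2 * (norm \<xi>)\<^sup>2"
  using power_mono[OF bound nonneg] by (simp add: power_mult_distrib)

lemma integrable_power2_comp:
  assumes [measurable]: "f \<in> borel_measurable M" and "integrable M (\<lambda>x. (norm (f x))\<^sup>2)"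
  shows "integrable M (\<lambda>x. (F (f x))\<^sup>2)"
proof (rule Bochner_Integration.integrable_bound[where f="\<lambda>x. b\<^sup>2 * (norm (f x))\<^sup>2"])
  show "integrable M (\<lambda>x. b\<^sup>2 * (norm (f x))\<^sup>2)"
    using assms(2) by auto
qed (use power2_le in auto)

end

lemma abs_mult_le_young:
  fixes x y t :: real
  assumes "t > 0"
  shows "\<bar>x * y\<bar> \<le> (x\<^sup>2 / t + t * y\<^sup>2) / 2"
proof -
  have "0 \<le> (\<bar>x\<bar> - t * \<bar>y\<bar>)\<^sup>2"
    by simp
  then have "2 * t * \<bar>x * y\<bar> \<le> x\<^sup>2 + t\<^sup>2 * y\<^sup>2"
    by (simp add: power2_eq_square algebra_simps abs_mult)
  then show ?thesis
    using assms by (simp add: field_simps power2_eq_square)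
qed

lemma norm_diff_power2_le: "(norm (a - b))\<^sup>2 \<le> 2 * (norm a)\<^sup>2 + 2 * (norm b)\<^sup>2"
proof -
  have "(norm (a - b))\<^sup>2 \<le> (norm a + norm b)\<^sup>2"
    by (intro power_mono norm_triangle_ineq4) auto
  also have "\<dots> \<le> 2 * (norm a)\<^sup>2 + 2 * (norm b)\<^sup>2"
    using abs_mult_le_young[of 1 "norm a" "norm b"] by (simp add: power2_eq_square algebra_simps)
  finally show ?thesis .
qed

lemma integrable_mult_square_integrable:
  fixes f g :: "'a \<Rightarrow> real"
  assumes [measurable]: "f \<in> borel_measurable M" "g \<in> borel_measurable M"
    and "integrable M (\<lambda>x. (f x)\<^sup>2)" "integrable M (\<lambda>x. (g x)\<^sup>2)"
  shows "integrable M (\<lambda>x. f x * g x)"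
proof (rule Bochner_Integration.integrable_bound[where f="\<lambda>x. ((f x)\<^sup>2 + (g x)\<^sup>2) / 2"])
  show "integrable M (\<lambda>x. ((f x)\<^sup>2 + (g x)\<^sup>2) / 2)"
    using assms by auto
  show "AE x in M. norm (f x * g x) \<le> norm (((f x)\<^sup>2 + (g x)\<^sup>2) / 2)"
    using abs_mult_le_young[of 1] by simp
qed simp

lemma integrable_bounded_finite_measure:
  fixes f :: "'a \<Rightarrow> real"
  assumes "finite_measure M" "f \<in> borel_measurable M" "\<And>x. \<bar>f x\<bar> \<le> B"
  shows "integrable M f"
proof (rule Bochner_Integration.integrable_bound[OF finite_measure.integrable_const[OF assms(1), of B]])
  show "AE x in M. norm (f x) \<le> norm B"
    using assms(3) by (intro AE_I2) (metis abs_ge_self order_trans real_norm_def)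
qed (use assms in auto)

lemma tendsto_integral_abs_mult_0:
  fixes f :: "nat \<Rightarrow> 'a \<Rightarrow> real" and g :: "'a \<Rightarrow> real"
  assumes [measurable]: "\<And>k. f k \<in> borel_measurable M" "g \<in> borel_measurable M"
    and f: "\<And>k. integrable M (\<lambda>x. (f k x)\<^sup>2)" and g: "integrable M (\<lambda>x. (g x)\<^sup>2)"
    and lim: "(\<lambda>k. \<integral>x. (f k x)\<^sup>2 \<partial>M) \<longlonglongrightarrow> 0"
  shows "(\<lambda>k. \<integral>x. \<bar>f k x * g x\<bar> \<partial>M) \<longlonglongrightarrow> 0"
proof (rule LIMSEQ_I)
  fix r :: real
  assume r: "r > 0"
  define G where "G = (\<integral>x. (g x)\<^sup>2 \<partial>M)"
  define t where "t = r / (G + 1)"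
  have "G \<ge> 0"
    by (simp add: G_def)
  then have t: "t > 0" "t * G < r"
    using r by (auto simp: t_def field_simps)
  obtain N where N: "\<And>k. k \<ge> N \<Longrightarrow> (\<integral>x. (f k x)\<^sup>2 \<partial>M) < t * r"
    using LIMSEQ_D[OF lim, of "t * r"] t r by auto
  have "norm ((\<integral>x. \<bar>f k x * g x\<bar> \<partial>M) - 0) < r" if "k \<ge> N" for k
  proof -
    have "(\<integral>x. \<bar>f k x * g x\<bar> \<partial>M) \<le> (\<integral>x. ((f k x)\<^sup>2 / t + t * (g x)\<^sup>2) / 2 \<partial>M)"
      using f g integrable_mult_square_integrable[of "f k" M g] abs_mult_le_young[OF t(1)]
      by (intro integral_mono) auto
    also have "\<dots> = ((\<integral>x. (f k x)\<^sup>2 \<partial>M) / t + t * G) / 2"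
      using f g by (simp add: G_def)
    also have "\<dots> < r"
    proof -
      have "(\<integral>x. (f k x)\<^sup>2 \<partial>M) / t < r"
        using N[OF that] t by (simp add: divide_less_eq mult.commute)
      then show ?thesis
        using t by simp
    qed
    finally show ?thesis
      by simp
  qed
  then show "\<exists>N. \<forall>k\<ge>N. norm ((\<integral>x. \<bar>f k x * g x\<bar> \<partial>M) - 0) < r"
    by blast
qed

lemma tendsto_integral_power2:
  fixes a :: "nat \<Rightarrow> 'a \<Rightarrow> real" and b :: "'a \<Rightarrow> real"
  assumes [measurable]: "\<And>k. a k \<in> borel_measurable M" "b \<in> borel_measurable M"
    and a: "\<And>k. integrable M (\<lambda>x. (a k x)\<^sup>2)" and b: "integrable M (\<lambda>x. (b x)\<^sup>2)"
    and lim: "(\<lambda>k. \<integral>x. (a k x - b x)\<^sup>2 \<partial>M) \<longlonglongrightarrow> 0"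
  shows "(\<lambda>k. \<integral>x. (a k x)\<^sup>2 \<partial>M) \<longlonglongrightarrow> (\<integral>x. (b x)\<^sup>2 \<partial>M)"
proof -
  have ab: "integrable M (\<lambda>x. (a k x - b x) * b x)" for k
    using integrable_mult_square_integrable[of "a k" M b] a b by (simp add: algebra_simps power2_eq_square)
  have a_b: "integrable M (\<lambda>x. (a k x - b x)\<^sup>2)" for k
  proof -
    have "integrable M (\<lambda>x. (a k x)\<^sup>2 - 2 * (a k x * b x) + (b x)\<^sup>2)"
      using integrable_mult_square_integrable[of "a k" M b] a b by auto
    moreover have "(\<lambda>x. (a k x - b x)\<^sup>2) = (\<lambda>x. (a k x)\<^sup>2 - 2 * (a k x * b x) + (b x)\<^sup>2)"
      by (simp add: power2_eq_square algebra_simps)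
    ultimately show ?thesis
      by simp
  qed
  have eq: "(\<integral>x. (a k x)\<^sup>2 \<partial>M)
      = (\<integral>x. (b x)\<^sup>2 \<partial>M) + ((\<integral>x. (a k x - b x)\<^sup>2 \<partial>M) + 2 * (\<integral>x. (a k x - b x) * b x \<partial>M))" for k
  proof -
    have "(\<integral>x. (a k x)\<^sup>2 \<partial>M) = (\<integral>x. (b x)\<^sup>2 + ((a k x - b x)\<^sup>2 + 2 * ((a k x - b x) * b x)) \<partial>M)"
      by (rule Bochner_Integration.integral_cong) (auto simp: power2_eq_square algebra_simps)
    then show ?thesis
      using ab a_b b by simp
  qed
  have "(\<lambda>k. \<integral>x. \<bar>(a k x - b x) * b x\<bar> \<partial>M) \<longlonglongrightarrow> 0"
    by (rule tendsto_integral_abs_mult_0[OF _ _ a_b b lim]) auto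
  then have "(\<lambda>k. \<integral>x. (a k x - b x) * b x \<partial>M) \<longlonglongrightarrow> 0"
    by (rule Lim_null_comparison[rotated]) (simp add: integral_norm_bound[simplified])
  then have "(\<lambda>k. (\<integral>x. (b x)\<^sup>2 \<partial>M) + ((\<integral>x. (a k x - b x)\<^sup>2 \<partial>M) + 2 * (\<integral>x. (a k x - b x) * b x \<partial>M)))
      \<longlonglongrightarrow> (\<integral>x. (b x)\<^sup>2 \<partial>M) + (0 + 2 * 0)"
    by (intro tendsto_intros lim)
  then show ?thesis
    by (simp add: eq)
qed

lemma L2_tendsto_AE_subseq:
  fixes a :: "nat \<Rightarrow> 'a \<Rightarrow> real" and b :: "'a \<Rightarrow> real"
  assumes "\<And>k. integrable M (\<lambda>x. (a k x - b x)\<^sup>2)"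
    and "(\<lambda>k. \<integral>x. (a k x - b x)\<^sup>2 \<partial>M) \<longlonglongrightarrow> 0"
  obtains r where "strict_mono r" "AE x in M. (\<lambda>n. a (r n) x) \<longlonglongrightarrow> b x"
proof -
  obtain r where r: "strict_mono r" "AE x in M. (\<lambda>n. (a (r n) x - b x)\<^sup>2) \<longlonglongrightarrow> 0"
    using tendsto_L1_AE_subseq[of M "\<lambda>k x. (a k x - b x)\<^sup>2"] assms by auto
  have "(\<lambda>n. a (r n) x) \<longlonglongrightarrow> b x" if "(\<lambda>n. (a (r n) x - b x)\<^sup>2) \<longlonglongrightarrow> 0" for x
  proof -
    have "(\<lambda>n. \<bar>a (r n) x - b x\<bar>) \<longlonglongrightarrow> 0"
      using tendsto_real_sqrt[OF that] by simp
    then show ?thesis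
      by (simp add: tendsto_rabs_zero_iff LIM_zero_iff)
  qed
  then show thesis
    using r by (auto elim!: AE_mp intro: that)
qed

lemma integrable_mult_bounded:
  fixes G h :: "'a \<Rightarrow> real"
  assumes "integrable M G" "h \<in> borel_measurable M" "\<And>x. \<bar>h x\<bar> \<le> C"
  shows "integrable M (\<lambda>x. G x * h x)"
proof (rule Bochner_Integration.integrable_bound[where f="\<lambda>x. \<bar>G x\<bar> * C"])
  show "integrable M (\<lambda>x. \<bar>G x\<bar> * C)"
    using assms(1) by auto
  show "AE x in M. norm (G x * h x) \<le> norm (\<bar>G x\<bar> * C)"
    using assms(3) by (intro AE_I2) (simp add: abs_mult mult_left_mono order_trans[OF _ abs_ge_self])
qed (use assms in measurable)

lemma tendsto_integral_mult_comp:
  fixes f :: "nat \<Rightarrow> 'a \<Rightarrow> real" and G :: "'a \<Rightarrow> real" and h :: "real \<Rightarrow> real"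
  assumes [measurable]: "\<And>n. f n \<in> borel_measurable M" "l \<in> borel_measurable M"
    and lim: "AE x in M. (\<lambda>n. f n x) \<longlonglongrightarrow> l x"
    and h: "continuous_on UNIV h" "\<And>s. \<bar>h s\<bar> \<le> C"
    and G: "integrable M G"
  shows "integrable M (\<lambda>x. G x * h (l x))"
    and "(\<lambda>n. \<integral>x. G x * h (f n x) \<partial>M) \<longlonglongrightarrow> (\<integral>x. G x * h (l x) \<partial>M)"
proof -
  have [measurable]: "h \<in> borel_measurable borel" "G \<in> borel_measurable M"
    using borel_measurable_continuous_onI[OF h(1)] borel_measurable_integrable[OF G] .
  have cont: "isCont h s" for s
    using h(1) by (simp add: continuous_on_eq_continuous_at)
  have lim': "AE x in M. (\<lambda>n. G x * h (f n x)) \<longlonglongrightarrow> G x * h (l x)"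
    using lim by eventually_elim (rule tendsto_mult_left, rule isCont_tendsto_compose[OF cont])
  have bound: "AE x in M. norm (G x * h (f n x)) \<le> \<bar>G x\<bar> * C" for n
    using h(2) by (auto simp: abs_mult intro!: mult_left_mono)
  have w: "integrable M (\<lambda>x. \<bar>G x\<bar> * C)"
    using G by auto
  have meas: "(\<lambda>x. G x * h (l x)) \<in> borel_measurable M" "\<And>n. (\<lambda>x. G x * h (f n x)) \<in> borel_measurable M"
    by measurable
  show "integrable M (\<lambda>x. G x * h (l x))"
    using integrable_dominated_convergence[OF meas w lim' bound] .
  show "(\<lambda>n. \<integral>x. G x * h (f n x) \<partial>M) \<longlonglongrightarrow> (\<integral>x. G x * h (l x) \<partial>M)"
    using integral_dominated_convergence[OF meas w lim' bound] .
qed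

lemma AE_eq_0_if_integral_tendsto_0:
  fixes f :: "nat \<Rightarrow> 'a \<Rightarrow> real"
  assumes [measurable]: "\<And>n. f n \<in> borel_measurable M" "l \<in> borel_measurable M"
    and nonneg: "\<And>n x. 0 \<le> f n x" and int: "\<And>n. integrable M (f n)"
    and lim0: "(\<lambda>n. \<integral>x. f n x \<partial>M) \<longlonglongrightarrow> 0"
    and lim: "AE x in M. (\<lambda>n. f n x) \<longlonglongrightarrow> l x"
  shows "AE x in M. l x = 0"
proof -
  have "integral\<^sup>N M (f n) = ennreal (\<integral>x. f n x \<partial>M)" for n
    using nonneg by (intro nn_integral_eq_integral int) auto
  then have "liminf (\<lambda>n. \<integral>\<^sup>+x. ennreal (f n x) \<partial>M) = 0"
    using tendsto_ennrealI[OF lim0] by (simp add: lim_imp_Liminf)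
  moreover have "AE x in M. liminf (\<lambda>n. ennreal (f n x)) = ennreal (l x)"
    using lim by eventually_elim (simp add: lim_imp_Liminf tendsto_ennrealI)
  then have "(\<integral>\<^sup>+x. liminf (\<lambda>n. ennreal (f n x)) \<partial>M) = (\<integral>\<^sup>+x. ennreal (l x) \<partial>M)"
    by (rule nn_integral_cong_AE)
  ultimately have "(\<integral>\<^sup>+x. ennreal (l x) \<partial>M) = 0"
    using nn_integral_liminf[of "\<lambda>n x. ennreal (f n x)" M] by simp
  then have "AE x in M. ennreal (l x) = 0"
    by (subst (asm) nn_integral_0_iff_AE) auto
  moreover have "AE x in M. 0 \<le> l x"
    using lim by eventually_elim (rule LIMSEQ_le_const, auto intro: nonneg)
  ultimately show ?thesis
    by eventually_elim (simp add: ennreal_eq_0_iff)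
qed

lemma set_borel_measurable_eq_restrict:
  fixes f :: "'a \<Rightarrow> 'b::{banach, second_countable_topology}"
  assumes "\<Omega> \<in> sets M"
  shows "set_borel_measurable M \<Omega> f \<longleftrightarrow> f \<in> borel_measurable (restrict_space M \<Omega>)"
  unfolding set_borel_measurable_def
  by (rule borel_measurable_restrict_space_iff[symmetric]) (use assms in auto)

lemma set_lebesgue_integral_eq_restrict:
  fixes f :: "'a \<Rightarrow> 'b::{banach, second_countable_topology}"
  assumes "\<Omega> \<in> sets M"
  shows "(LINT x:\<Omega>|M. f x) = integral\<^sup>L (restrict_space M \<Omega>) f"
  unfolding set_lebesgue_integral_def
  by (rule integral_restrict_space[symmetric]) (use assms in auto)

locale bounded_domain =
  fixes \<Omega> :: "(real^'n::finite) set"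
  assumes open_domain: "open \<Omega>" and bounded_domain: "bounded \<Omega>"
begin

abbreviation M :: "(real^'n) measure" where
  "M \<equiv> lebesgue_on \<Omega>"

lemma domain_sets [simp]: "\<Omega> \<in> sets lebesgue"
  using lmeasurable_open[OF bounded_domain open_domain] by auto

lemma finite_measure: "finite_measure M"
proof -
  have "emeasure lebesgue \<Omega> \<noteq> top"
    using lmeasurable_open[OF bounded_domain open_domain] fmeasurableD2 by blast
  then show ?thesis
    by (intro finite_measureI) (simp add: emeasure_restrict_space space_restrict_space)
qed

lemma integrable_bounded:
  fixes f :: "real^'n \<Rightarrow> real"
  shows "f \<in> borel_measurable M \<Longrightarrow> (\<And>x. \<bar>f x\<bar> \<le> B) \<Longrightarrow> integrable M f"
  by (rule integrable_bounded_finite_measure[OF finite_measure])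

lemma borel_measurable_continuous: "continuous_on UNIV f \<Longrightarrow> f \<in> borel_measurable M"
  by (rule continuous_imp_measurable_on_sets_lebesgue[OF continuous_on_subset domain_sets]) auto

lemma borel_measurable_test_fun: "test_fun \<Omega> v \<Longrightarrow> v \<in> borel_measurable M"
  by (rule borel_measurable_continuous) (auto simp: test_fun_def continuous_on_smooth)

lemma borel_measurable_grad_test_fun: "test_fun \<Omega> v \<Longrightarrow> grad v \<in> borel_measurable M"
  by (rule borel_measurable_continuous) (auto simp: test_fun_def continuous_on_grad_smooth)

lemma integrable_test_fun_power2:
  assumes "test_fun \<Omega> v"
  shows "integrable M (\<lambda>x. (v x)\<^sup>2)"
proof -
  obtain B where "\<And>x. \<bar>v x\<bar> \<le> B"
    using test_fun_bounded[OF assms] by blast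
  then have "\<bar>v x\<bar>\<^sup>2 \<le> B\<^sup>2" for x
    by (intro power_mono) auto
  then have "\<bar>(v x)\<^sup>2\<bar> \<le> B\<^sup>2" for x
    by simp
  then show ?thesis
    using borel_measurable_test_fun[OF assms] by (intro integrable_bounded) auto
qed

lemma integrable_norm_grad_test_fun_power2:
  assumes "test_fun \<Omega> v"
  shows "integrable M (\<lambda>x. (norm (grad v x))\<^sup>2)"
proof -
  obtain B where "\<And>x. norm (grad v x) \<le> B"
    using test_fun_grad_bounded[OF assms] by blast
  then have "\<bar>(norm (grad v x))\<^sup>2\<bar> \<le> B\<^sup>2" for x
    by (simp add: power_mono)
  then show ?thesis
    using borel_measurable_grad_test_fun[OF assms] by (intro integrable_bounded) auto
qed

lemma W012_test_fun: "test_fun \<Omega> v \<Longrightarrow> W012 \<Omega> v (grad v)"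
  unfolding W012_def
  by (intro conjI exI[of _ "\<lambda>k. v"])
    (auto simp: set_borel_measurable_eq_restrict set_integrable_eq borel_measurable_test_fun
      borel_measurable_grad_test_fun integrable_test_fun_power2 integrable_norm_grad_test_fun_power2)

lemma exists_test_fun_nonzero:
  assumes "\<Omega> \<noteq> {}"
  obtains v where "test_fun \<Omega> v" "(LINT x:\<Omega>|lebesgue. (v x)\<^sup>2) \<noteq> 0"
proof -
  obtain x0 r where r: "r > 0" "cball x0 r \<subseteq> \<Omega>"
    using assms open_domain open_contains_cball by blast
  have test: "test_fun \<Omega> (bump x0 r)"
    using test_fun_bump[OF r] .
  moreover have "(LINT x:\<Omega>|lebesgue. (bump x0 r x)\<^sup>2) \<noteq> 0"
  proof
    assume "(LINT x:\<Omega>|lebesgue. (bump x0 r x)\<^sup>2) = 0"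
    then have "AE x in M. (bump x0 r x)\<^sup>2 = 0"
      using integral_nonneg_eq_0_iff_AE[OF integrable_test_fun_power2[OF test]]
      by (simp add: set_lebesgue_integral_eq_restrict)
    moreover have "ball x0 r \<in> sets M"
      using r by (simp add: sets_restrict_space_iff) (meson ball_subset_cball order_trans)
    moreover have "{x \<in> space M. \<not> (bump x0 r x)\<^sup>2 = 0} = ball x0 r"
      using bump_support[OF r(1)] r(2) ball_subset_cball by (auto simp: space_restrict_space)
    ultimately have "emeasure M (ball x0 r) = 0"
      using AE_iff_measurable[of "ball x0 r" M] by simp
    moreover have "emeasure M (ball x0 r) = emeasure lborel (ball x0 r)"
      using r ball_subset_cball by (subst emeasure_restrict_space) auto
    ultimately show False
      using content_ball_pos[OF r(1), of x0] by (simp add: measure_def)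
  qed
  ultimately show thesis ..
qed

end

locale W012_approx = bounded_domain \<Omega> for \<Omega> :: "(real^'n::finite) set" +
  fixes u :: "real^'n \<Rightarrow> real" and g :: "real^'n \<Rightarrow> real^'n" and \<psi> :: "nat \<Rightarrow> real^'n \<Rightarrow> real"
  assumes u_measurable [measurable]: "u \<in> borel_measurable (lebesgue_on \<Omega>)"
    and square_integrable_u: "integrable (lebesgue_on \<Omega>) (\<lambda>x. (u x)\<^sup>2)"
    and g_measurable [measurable]: "g \<in> borel_measurable (lebesgue_on \<Omega>)"
    and square_integrable_g: "integrable (lebesgue_on \<Omega>) (\<lambda>x. (norm (g x))\<^sup>2)"
    and test_fun_\<psi>: "\<And>k. test_fun \<Omega> (\<psi> k)"
    and \<psi>_tendsto: "(\<lambda>k. \<integral>x. (\<psi> k x - u x)\<^sup>2 \<partial>lebesgue_on \<Omega>) \<longlonglongrightarrow> 0"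
    and grad_\<psi>_tendsto: "(\<lambda>k. \<integral>x. (norm (grad (\<psi> k) x - g x))\<^sup>2 \<partial>lebesgue_on \<Omega>) \<longlonglongrightarrow> 0"

lemma (in bounded_domain) W012_approx_exists:
  assumes "W012 \<Omega> u g"
  obtains \<psi> where "W012_approx \<Omega> u g \<psi>"
  using assms unfolding W012_def W012_approx_def W012_approx_axioms_def
  by (auto simp: bounded_domain_axioms set_borel_measurable_eq_restrict set_integrable_eq
      set_lebesgue_integral_eq_restrict)

context W012_approx
begin

lemma smooth_\<psi>: "smooth (\<psi> k)"
  using test_fun_\<psi> by (simp add: test_fun_def)

lemma \<psi>_measurable [measurable]: "\<psi> k \<in> borel_measurable M"
  using borel_measurable_test_fun[OF test_fun_\<psi>] .

lemma grad_\<psi>_measurable [measurable]: "grad (\<psi> k) \<in> borel_measurable M"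
  using borel_measurable_grad_test_fun[OF test_fun_\<psi>] .

lemma integrable_norm_g: "integrable M (\<lambda>x. norm (g x))"
proof (rule Bochner_Integration.integrable_bound[where f="\<lambda>x. (1 + (norm (g x))\<^sup>2) / 2"])
  show "integrable M (\<lambda>x. (1 + (norm (g x))\<^sup>2) / 2)"
    using square_integrable_g integrable_bounded[of "\<lambda>_. 1" 1] by simp
  show "AE x in M. norm (norm (g x)) \<le> norm ((1 + (norm (g x))\<^sup>2) / 2)"
    using abs_mult_le_young[of 1 1 "norm (g _)"] by auto
qed simp

lemma integrable_\<psi>_diff_power2: "integrable M (\<lambda>x. (\<psi> k x - u x)\<^sup>2)"
proof (rule Bochner_Integration.integrable_bound[where f="\<lambda>x. 2 * (\<psi> k x)\<^sup>2 + 2 * (u x)\<^sup>2"])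
  show "integrable M (\<lambda>x. 2 * (\<psi> k x)\<^sup>2 + 2 * (u x)\<^sup>2)"
    using integrable_test_fun_power2[OF test_fun_\<psi>] square_integrable_u by auto
  show "AE x in M. norm ((\<psi> k x - u x)\<^sup>2) \<le> norm (2 * (\<psi> k x)\<^sup>2 + 2 * (u x)\<^sup>2)"
    using norm_diff_power2_le[of "\<psi> k _" "u _"] by auto
qed measurable

lemma integrable_grad_\<psi>_diff_power2: "integrable M (\<lambda>x. (norm (grad (\<psi> k) x - g x))\<^sup>2)"
proof (rule Bochner_Integration.integrable_bound
    [where f="\<lambda>x. 2 * (norm (grad (\<psi> k) x))\<^sup>2 + 2 * (norm (g x))\<^sup>2"])
  show "integrable M (\<lambda>x. 2 * (norm (grad (\<psi> k) x))\<^sup>2 + 2 * (norm (g x))\<^sup>2)"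
    using integrable_norm_grad_test_fun_power2[OF test_fun_\<psi>] square_integrable_g by auto
  show "AE x in M. norm ((norm (grad (\<psi> k) x - g x))\<^sup>2) \<le> norm (2 * (norm (grad (\<psi> k) x))\<^sup>2 + 2 * (norm (g x))\<^sup>2)"
    using norm_diff_power2_le[of "grad (\<psi> k) _" "g _"] by auto
qed measurable

lemma AE_subseq_\<psi>_tendsto:
  obtains r where "strict_mono r" "AE x in M. (\<lambda>n. \<psi> (r n) x) \<longlonglongrightarrow> u x"
  using L2_tendsto_AE_subseq[OF integrable_\<psi>_diff_power2 \<psi>_tendsto] .

lemma tendsto_integral_\<psi>_power2: "(\<lambda>k. \<integral>x. (\<psi> k x)\<^sup>2 \<partial>M) \<longlonglongrightarrow> (\<integral>x. (u x)\<^sup>2 \<partial>M)"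
  by (rule tendsto_integral_power2)
    (use integrable_test_fun_power2[OF test_fun_\<psi>] square_integrable_u \<psi>_tendsto in auto)

lemma tendsto_integral_F_grad_\<psi>_power2:
  assumes "bounded_finsler_norm F b"
  shows "(\<lambda>k. \<integral>x. (F (grad (\<psi> k) x))\<^sup>2 \<partial>M) \<longlonglongrightarrow> (\<integral>x. (F (g x))\<^sup>2 \<partial>M)"
proof -
  interpret bounded_finsler_norm F b
    by fact
  note F_sq = power2_diff_le[of "grad (\<psi> k) x" "g x" for k x]
  have F_int: "integrable M (\<lambda>x. (F (grad (\<psi> k) x) - F (g x))\<^sup>2)" for k
  proof (rule Bochner_Integration.integrable_bound[where f="\<lambda>x. b\<^sup>2 * (norm (grad (\<psi> k) x - g x))\<^sup>2"])
    show "integrable M (\<lambda>x. b\<^sup>2 * (norm (grad (\<psi> k) x - g x))\<^sup>2)"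
      using integrable_grad_\<psi>_diff_power2 by auto
  qed (use F_sq in auto)
  have "(\<lambda>k. \<integral>x. (F (grad (\<psi> k) x) - F (g x))\<^sup>2 \<partial>M) \<longlonglongrightarrow> 0"
  proof (rule tendsto_sandwich[OF _ _ tendsto_const tendsto_mult_right_zero[OF grad_\<psi>_tendsto]])
    have "(\<integral>x. (F (grad (\<psi> k) x) - F (g x))\<^sup>2 \<partial>M) \<le> (\<integral>x. b\<^sup>2 * (norm (grad (\<psi> k) x - g x))\<^sup>2 \<partial>M)"
      for k using F_int integrable_grad_\<psi>_diff_power2 F_sq by (intro integral_mono) auto
    then show "\<forall>\<^sub>F k in sequentially. (\<integral>x. (F (grad (\<psi> k) x) - F (g x))\<^sup>2 \<partial>M)
        \<le> b\<^sup>2 * (\<integral>x. (norm (grad (\<psi> k) x - g x))\<^sup>2 \<partial>M)"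
      by simp
  qed auto
  moreover have "integrable M (\<lambda>x. (F (grad (\<psi> k) x))\<^sup>2)" for k
    using integrable_power2_comp[OF grad_\<psi>_measurable integrable_norm_grad_test_fun_power2[OF test_fun_\<psi>]] .
  moreover have "integrable M (\<lambda>x. (F (g x))\<^sup>2)"
    using integrable_power2_comp[OF g_measurable square_integrable_g] .
  ultimately show ?thesis
    by (intro tendsto_integral_power2) auto
qed

end

section \<open>Weak solutions\<close>

locale gelfand_solution = W012_approx \<Omega> u g \<psi> + bounded_finsler_norm F b
  for \<Omega> :: "(real^'n::finite) set" and u g \<psi> and F :: "real^'n \<Rightarrow> real" and b +
  fixes lam :: real
  assumes lam_pos: "0 < lam"
    and differentiable_F: "\<And>\<xi>. \<xi> \<noteq> 0 \<Longrightarrow> F differentiable (at \<xi>)"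
    and continuous_grad_F: "continuous_on (- {0}) (grad F)"
    and exp_u_integrable: "\<And>K. compact K \<Longrightarrow> K \<subseteq> \<Omega> \<Longrightarrow> set_integrable lebesgue K (\<lambda>x. exp (u x))"
    and weak_eq: "\<And>\<phi>. test_fun \<Omega> \<phi> \<Longrightarrow>
      (\<integral>x. F (g x) * frechet_derivative F (at (g x)) (grad \<phi> x) \<partial>lebesgue_on \<Omega>)
        = lam * (\<integral>x. exp (u x) * \<phi> x \<partial>lebesgue_on \<Omega>)"
begin

definition flux :: "real^'n \<Rightarrow> real^'n" where
  "flux x = F (g x) *\<^sub>R grad F (g x)"

lemma borel_measurable_flux [measurable]: "flux \<in> borel_measurable M"
proof -
  have [measurable]: "grad F \<in> borel_measurable borel"
    by (rule borel_measurable_continuous_countable_exceptions[of "{0}"]) (use continuous_grad_F in auto)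
  show ?thesis
    unfolding flux_def by measurable
qed

lemma flux_inner: "F (g x) * frechet_derivative F (at (g x)) w = flux x \<bullet> w"
  using frechet_derivative_eq_grad[OF differentiable_F] by (cases "g x = 0") (auto simp: flux_def)

lemma abs_flux_inner_le: "\<bar>flux x \<bullet> w\<bar> \<le> F (g x) * F w"
proof (cases "g x = 0")
  case False
  then show ?thesis
    using abs_frechet_derivative_le[OF differentiable_F[OF False], of w] nonneg[of "g x"]
    by (simp add: flux_inner[symmetric] abs_mult mult_left_mono)
qed (simp add: flux_def)

lemma flux_inner_g: "flux x \<bullet> g x = (F (g x))\<^sup>2"
  using frechet_derivative_self[OF differentiable_F] flux_inner[of x "g x"]
  by (cases "g x = 0") (auto simp: flux_def power2_eq_square)

lemma abs_flux_inner_le_norm: "\<bar>flux x \<bullet> w\<bar> \<le> b\<^sup>2 * norm (g x) * norm w"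
proof -
  have "F (g x) * F w \<le> (b * norm (g x)) * (b * norm w)"
    by (intro mult_mono bound) (use nonneg bound_nonneg in auto)
  then show ?thesis
    using abs_flux_inner_le[of x w] by (simp add: power2_eq_square algebra_simps)
qed

lemma weak_eq_flux: "test_fun \<Omega> \<phi> \<Longrightarrow> (\<integral>x. flux x \<bullet> grad \<phi> x \<partial>M) = lam * (\<integral>x. exp (u x) * \<phi> x \<partial>M)"
  using weak_eq by (simp add: flux_inner)

lemma integrable_flux_inner:
  assumes [measurable]: "w \<in> borel_measurable M" and "\<And>x. norm (w x) \<le> B"
  shows "integrable M (\<lambda>x. flux x \<bullet> w x)"
proof (rule Bochner_Integration.integrable_bound[where f="\<lambda>x. b\<^sup>2 * B * norm (g x)"])
  show "integrable M (\<lambda>x. b\<^sup>2 * B * norm (g x))"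
    using integrable_norm_g by auto
  have "\<bar>flux x \<bullet> w x\<bar> \<le> b\<^sup>2 * B * norm (g x)" for x
    using abs_flux_inner_le_norm[of x "w x"] mult_left_mono[OF assms(2), of "b\<^sup>2 * norm (g x)" x]
    by (simp add: mult_ac)
  then show "AE x in M. norm (flux x \<bullet> w x) \<le> norm (b\<^sup>2 * B * norm (g x))"
    by (intro AE_I2) (metis abs_ge_self order_trans real_norm_def)
qed measurable

lemma integrable_flux_inner_grad: "test_fun \<Omega> v \<Longrightarrow> integrable M (\<lambda>x. flux x \<bullet> grad v x)"
  using test_fun_grad_bounded integrable_flux_inner borel_measurable_grad_test_fun by metis

lemma integrable_exp_u_mult:
  assumes v: "test_fun \<Omega> v" and [measurable]: "w \<in> borel_measurable M"
    and "\<And>x. \<bar>w x\<bar> \<le> B" and "\<And>x. v x = 0 \<Longrightarrow> w x = 0"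
  shows "integrable M (\<lambda>x. exp (u x) * w x)"
proof -
  let ?K = "closure {x. v x \<noteq> 0}"
  have K: "compact ?K" "?K \<subseteq> \<Omega>"
    using v by (auto simp: test_fun_def)
  then have [measurable]: "?K \<in> sets M"
    by (simp add: sets_restrict_space_iff compact_imp_closed borel_closed)
  have "integrable lebesgue (\<lambda>x. indicator ?K x *\<^sub>R exp (u x))"
    using exp_u_integrable[OF K] by (simp add: set_integrable_def)
  moreover have "(\<lambda>x. indicator \<Omega> x *\<^sub>R (indicator ?K x *\<^sub>R exp (u x)))
      = (\<lambda>x. indicator ?K x *\<^sub>R exp (u x))"
    using K(2) by (auto simp: indicator_def fun_eq_iff)
  ultimately have "integrable M (\<lambda>x. indicator ?K x *\<^sub>R exp (u x))"
    by (simp add: integrable_restrict_space)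
  then have int: "integrable M (\<lambda>x. B * (indicator ?K x *\<^sub>R exp (u x)))"
    by simp
  have "\<bar>exp (u x) * w x\<bar> \<le> B * (indicator ?K x *\<^sub>R exp (u x))" for x
    using assms(3,4) not_in_closure_support[of x v] by (cases "x \<in> ?K") (auto simp: abs_mult)
  then have "AE x in M. norm (exp (u x) * w x) \<le> norm (B * (indicator ?K x *\<^sub>R exp (u x)))"
    by (intro AE_I2) (metis abs_ge_self order_trans real_norm_def)
  then show ?thesis
    by (rule Bochner_Integration.integrable_bound[OF int, rotated]) measurable
qed

text \<open>The error made by replacing \<open>\<nabla>u\<close> with \<open>\<nabla>\<psi>\<^sub>n\<close> in \<open>F(\<nabla>u) F\<^sub>\<xi>(\<nabla>u) \<cdot> \<nabla>u = F(\<nabla>u)\<^sup>2\<close>,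
  for uniformly bounded weights.\<close>

lemma flux_error:
  assumes [measurable]: "\<And>n. w n \<in> borel_measurable M" and w: "\<And>n x. \<bar>w n x\<bar> \<le> C"
  shows "integrable M (\<lambda>x. w n x * (flux x \<bullet> (grad (\<psi> n) x - g x)))"
    and "(\<lambda>n. \<integral>x. w n x * (flux x \<bullet> (grad (\<psi> n) x - g x)) \<partial>M) \<longlonglongrightarrow> 0"
proof -
  let ?e = "\<lambda>n x. \<bar>norm (grad (\<psi> n) x - g x) * norm (g x)\<bar>"
  have "0 \<le> C"
    using w[of 0 undefined] by linarith
  have bound: "\<bar>w n x * (flux x \<bullet> (grad (\<psi> n) x - g x))\<bar> \<le> C * b\<^sup>2 * ?e n x" for n x
  proof -
    have "\<bar>w n x\<bar> * \<bar>flux x \<bullet> (grad (\<psi> n) x - g x)\<bar> \<le> C * (b\<^sup>2 * norm (g x) * norm (grad (\<psi> n) x - g x))"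
      using w \<open>0 \<le> C\<close> by (intro mult_mono abs_flux_inner_le_norm) auto
    then show ?thesis
      by (simp only: abs_mult) (simp add: algebra_simps)
  qed
  have e_int: "integrable M (?e n)" for n
    using integrable_mult_square_integrable[of "\<lambda>x. norm (grad (\<psi> n) x - g x)" M "\<lambda>x. norm (g x)"]
      integrable_grad_\<psi>_diff_power2 square_integrable_g by auto
  show int: "integrable M (\<lambda>x. w n x * (flux x \<bullet> (grad (\<psi> n) x - g x)))" for n
  proof (rule Bochner_Integration.integrable_bound[where f="\<lambda>x. C * b\<^sup>2 * ?e n x"])
    show "integrable M (\<lambda>x. C * b\<^sup>2 * ?e n x)"
      using e_int by auto
    show "AE x in M. norm (w n x * (flux x \<bullet> (grad (\<psi> n) x - g x))) \<le> norm (C * b\<^sup>2 * ?e n x)"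
      using bound by (intro AE_I2) (metis abs_ge_self order_trans real_norm_def)
  qed measurable
  have "(\<lambda>n. \<integral>x. ?e n x \<partial>M) \<longlonglongrightarrow> 0"
    by (rule tendsto_integral_abs_mult_0)
      (use integrable_grad_\<psi>_diff_power2 square_integrable_g grad_\<psi>_tendsto in auto)
  then show "(\<lambda>n. \<integral>x. w n x * (flux x \<bullet> (grad (\<psi> n) x - g x)) \<partial>M) \<longlonglongrightarrow> 0"
  proof (rule Lim_null_comparison[OF _ tendsto_mult_right_zero, rotated])
    show "\<forall>\<^sub>F n in sequentially. norm (\<integral>x. w n x * (flux x \<bullet> (grad (\<psi> n) x - g x)) \<partial>M)
        \<le> C * b\<^sup>2 * (\<integral>x. ?e n x \<partial>M)"
    proof (intro always_eventually allI)
      fix n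
      have "norm (\<integral>x. w n x * (flux x \<bullet> (grad (\<psi> n) x - g x)) \<partial>M)
          \<le> (\<integral>x. C * b\<^sup>2 * ?e n x \<partial>M)"
        by (rule Bochner_Integration.integral_norm_bound_integral[OF int integrable_mult_right[OF e_int]]) (use bound in simp)
      then show "norm (\<integral>x. w n x * (flux x \<bullet> (grad (\<psi> n) x - g x)) \<partial>M) \<le> C * b\<^sup>2 * (\<integral>x. ?e n x \<partial>M)"
        by simp
    qed
  qed
qed

lemma integrable_exp_u_flat:
  "integrable M (\<lambda>x. exp (u x) * flat 0 (- \<psi> n x))"
proof (rule integrable_exp_u_mult[OF test_fun_\<psi>[of n], where B=1])
  show "\<bar>flat 0 (- \<psi> n x)\<bar> \<le> 1" for x
    using flat_0_bounds[of "- \<psi> n x"] by simp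
  show "\<psi> n x = 0 \<Longrightarrow> flat 0 (- \<psi> n x) = 0" for x
    by (simp add: flat_def)
qed measurable

text \<open>Testing the equation with \<open>-f(-\<psi>\<^sub>n)\<close>, where \<open>f = flat 0\<close>.\<close>

lemma integral_exp_u_flat_tendsto_0: "(\<lambda>n. \<integral>x. exp (u x) * flat 0 (- \<psi> n x) \<partial>M) \<longlonglongrightarrow> 0"
proof -
  define q where "q n = (\<integral>x. exp (u x) * flat 0 (- \<psi> n x) \<partial>M)" for n
  define e where "e n = (\<integral>x. flat 1 (- \<psi> n x) * (flux x \<bullet> (grad (\<psi> n) x - g x)) \<partial>M)" for n
  have weight: "\<bar>flat 1 (- \<psi> n x)\<bar> \<le> 4" for n x
    using flat_1_bounds[of "- \<psi> n x"] by simp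
  have err: "integrable M (\<lambda>x. flat 1 (- \<psi> n x) * (flux x \<bullet> (grad (\<psi> n) x - g x)))" "e \<longlonglongrightarrow> 0" for n
    unfolding e_def by (rule flux_error[where w="\<lambda>n x. flat 1 (- \<psi> n x)", OF _ weight]; measurable)+
  have q_le: "lam * q n \<le> - e n" for n
  proof -
    have test: "test_fun \<Omega> (\<lambda>x. - flat 0 (- \<psi> n x))"
      using test_fun_flat_neg[OF test_fun_\<psi>] .
    have "flat 1 (- \<psi> n x) * (flux x \<bullet> (grad (\<psi> n) x - g x)) \<le> flux x \<bullet> grad (\<lambda>x. - flat 0 (- \<psi> n x)) x" for x
      using flat_1_bounds[of "- \<psi> n x"]
      by (simp add: grad_flat_neg[OF smooth_\<psi>] inner_diff_right flux_inner_g algebra_simps)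
    then have "e n \<le> (\<integral>x. flux x \<bullet> grad (\<lambda>x. - flat 0 (- \<psi> n x)) x \<partial>M)"
      unfolding e_def using err(1) integrable_flux_inner_grad[OF test] by (intro integral_mono) auto
    also have "\<dots> = - lam * q n"
      by (simp add: weak_eq_flux[OF test] q_def)
    finally show ?thesis
      by simp
  qed
  have upper: "q n \<le> - e n / lam" for n
    unfolding pos_le_divide_eq[OF lam_pos] using q_le[of n] by (simp add: mult.commute)
  have lower: "0 \<le> q n" for n
    unfolding q_def by (intro integral_nonneg_AE AE_I2 mult_nonneg_nonneg) (auto simp: flat_0_bounds)
  have lim: "(\<lambda>n. - e n / lam) \<longlonglongrightarrow> 0"
    using tendsto_minus[OF err(2)] by (intro tendsto_divide_zero) simp
  have "q \<longlonglongrightarrow> 0"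
    by (rule tendsto_sandwich[OF _ _ tendsto_const lim]) (use lower upper in simp_all)
  then show ?thesis
    by (simp add: q_def[abs_def])
qed

lemma AE_u_nonneg: "AE x in M. 0 \<le> u x"
proof -
  obtain r where r: "strict_mono r" "AE x in M. (\<lambda>n. \<psi> (r n) x) \<longlonglongrightarrow> u x"
    using AE_subseq_\<psi>_tendsto .
  have "AE x in M. exp (u x) * flat 0 (- u x) = 0"
  proof (rule AE_eq_0_if_integral_tendsto_0[where f="\<lambda>n x. exp (u x) * flat 0 (- \<psi> (r n) x)"])
    show "(\<lambda>n. \<integral>x. exp (u x) * flat 0 (- \<psi> (r n) x) \<partial>M) \<longlonglongrightarrow> 0"
      using LIMSEQ_subseq_LIMSEQ[OF integral_exp_u_flat_tendsto_0 r(1)] by (simp add: o_def)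
    show "AE x in M. (\<lambda>n. exp (u x) * flat 0 (- \<psi> (r n) x)) \<longlonglongrightarrow> exp (u x) * flat 0 (- u x)"
      using r(2) by eventually_elim
        (intro tendsto_mult_left continuous_on_tendsto_compose[OF continuous_on_flat] tendsto_minus, auto)
  qed (use integrable_exp_u_flat flat_0_bounds in auto)
  then show ?thesis
  proof eventually_elim
    case (elim x)
    then show ?case
      using flat_0_pos_iff[of "- u x"] by simp
  qed
qed

lemma integrable_test_fun_coefficients:
  assumes v: "test_fun \<Omega> v"
  shows "integrable M (\<lambda>x. 2 * v x * (flux x \<bullet> grad v x))"
    and "integrable M (\<lambda>x. (v x)\<^sup>2 * (F (g x))\<^sup>2)"
    and "integrable M (\<lambda>x. exp (u x) * (v x)\<^sup>2)"
proof -
  obtain B where B: "\<And>x. \<bar>v x\<bar> \<le> B"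
    using test_fun_bounded[OF v] by blast
  have B2: "\<bar>(v x)\<^sup>2\<bar> \<le> B\<^sup>2" for x
    using power_mono[OF B abs_ge_zero, of x 2] by simp
  have [measurable]: "v \<in> borel_measurable M"
    using borel_measurable_test_fun[OF v] .
  have "integrable M (\<lambda>x. (flux x \<bullet> grad v x) * (2 * v x))"
  proof (rule integrable_mult_bounded[OF integrable_flux_inner_grad[OF v]])
    show "\<bar>2 * v x\<bar> \<le> 2 * B" for x
      using B[of x] by simp
  qed measurable
  then show "integrable M (\<lambda>x. 2 * v x * (flux x \<bullet> grad v x))"
    by (simp add: mult_ac)
  have "integrable M (\<lambda>x. (F (g x))\<^sup>2 * (v x)\<^sup>2)"
    by (rule integrable_mult_bounded[OF integrable_power2_comp[OF g_measurable square_integrable_g] _ B2])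
      measurable
  then show "integrable M (\<lambda>x. (v x)\<^sup>2 * (F (g x))\<^sup>2)"
    by (simp add: mult.commute)
  show "integrable M (\<lambda>x. exp (u x) * (v x)\<^sup>2)"
    by (rule integrable_exp_u_mult[OF v _ B2]) auto
qed

lemma flux_inner_grad_square_mult:
  assumes v: "smooth v" and H: "\<And>s. (H has_real_derivative H' s) (at s)" "smooth (\<lambda>x. H (\<psi> n x))"
  shows "flux x \<bullet> grad (\<lambda>x. v x * (v x * H (\<psi> n x))) x
    = 2 * v x * (flux x \<bullet> grad v x) * H (\<psi> n x) + (v x)\<^sup>2 * (F (g x))\<^sup>2 * H' (\<psi> n x)
      + (v x)\<^sup>2 * H' (\<psi> n x) * (flux x \<bullet> (grad (\<psi> n) x - g x))"
proof -
  have d: "\<And>x. v differentiable (at x)" "\<And>x. (\<lambda>x. H (\<psi> n x)) differentiable (at x)"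
    "\<And>x. \<psi> n differentiable (at x)"
    using smooth_differentiable v H(2) smooth_\<psi> by auto
  have gr: "grad (\<lambda>x. v x * (v x * H (\<psi> n x))) x
      = v x *\<^sub>R (v x *\<^sub>R (H' (\<psi> n x) *\<^sub>R grad (\<psi> n) x) + H (\<psi> n x) *\<^sub>R grad v x)
        + (v x * H (\<psi> n x)) *\<^sub>R grad v x"
    using d by (simp add: grad_mult differentiable_mult grad_comp[OF H(1) d(3)])
  show ?thesis
    unfolding gr inner_add_right inner_scaleR_right
    by (simp add: inner_diff_right flux_inner_g algebra_simps power2_eq_square)
qed

lemma weak_eq_square_mult:
  assumes v: "test_fun \<Omega> v"
    and H: "\<And>s. (H has_real_derivative H' s) (at s)" "continuous_on UNIV H'"
      "\<And>s. \<bar>H s\<bar> \<le> C" "\<And>s. \<bar>H' s\<bar> \<le> C" "smooth (\<lambda>x. H (\<psi> n x))"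
  shows "(\<integral>x. 2 * v x * (flux x \<bullet> grad v x) * H (\<psi> n x) \<partial>M)
      + (\<integral>x. (v x)\<^sup>2 * (F (g x))\<^sup>2 * H' (\<psi> n x) \<partial>M)
      + (\<integral>x. (v x)\<^sup>2 * H' (\<psi> n x) * (flux x \<bullet> (grad (\<psi> n) x - g x)) \<partial>M)
    = lam * (\<integral>x. exp (u x) * (v x)\<^sup>2 * H (\<psi> n x) \<partial>M)"
proof -
  let ?t1 = "\<lambda>x. 2 * v x * (flux x \<bullet> grad v x) * H (\<psi> n x)"
  let ?t2 = "\<lambda>x. (v x)\<^sup>2 * (F (g x))\<^sup>2 * H' (\<psi> n x)"
  let ?t3 = "\<lambda>x. (v x)\<^sup>2 * H' (\<psi> n x) * (flux x \<bullet> (grad (\<psi> n) x - g x))"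
  have smooth_v: "smooth v"
    using v by (simp add: test_fun_def)
  have cont_H: "continuous_on UNIV H"
    using H(1) by (meson DERIV_continuous continuous_at_imp_continuous_on)
  have [measurable]: "H \<in> borel_measurable borel" "H' \<in> borel_measurable borel"
    "v \<in> borel_measurable M"
    using borel_measurable_continuous_onI[OF cont_H] borel_measurable_continuous_onI[OF H(2)]
      borel_measurable_test_fun[OF v] .
  have test: "test_fun \<Omega> (\<lambda>x. v x * (v x * H (\<psi> n x)))"
    by (intro test_fun_mult[OF v] smooth_mult smooth_v H(5))
  obtain B where "\<And>x. \<bar>v x\<bar> \<le> B"
    using test_fun_bounded[OF v] by blast
  then have "(v x)\<^sup>2 \<le> B\<^sup>2" for x
    using power_mono[of "\<bar>v x\<bar>" B 2] by simp
  then have weight: "\<bar>(v x)\<^sup>2 * H' (\<psi> m x)\<bar> \<le> B\<^sup>2 * C" for m x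
    using mult_mono[OF _ H(4)] by (simp add: abs_mult)
  have "integrable M ?t1" "integrable M ?t2" "integrable M ?t3"
    using integrable_mult_bounded[OF integrable_test_fun_coefficients(1)[OF v] _ H(3)]
      integrable_mult_bounded[OF integrable_test_fun_coefficients(2)[OF v] _ H(4)]
      flux_error(1)[where w="\<lambda>n x. (v x)\<^sup>2 * H' (\<psi> n x)", OF _ weight]
    by simp_all
  then have "(\<integral>x. ?t1 x \<partial>M) + (\<integral>x. ?t2 x \<partial>M) + (\<integral>x. ?t3 x \<partial>M) = (\<integral>x. ?t1 x + ?t2 x + ?t3 x \<partial>M)"
    by simp
  also have "\<dots> = (\<integral>x. flux x \<bullet> grad (\<lambda>x. v x * (v x * H (\<psi> n x))) x \<partial>M)"
    using flux_inner_grad_square_mult[OF smooth_v H(1) H(5)] by simp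
  also have "\<dots> = lam * (\<integral>x. exp (u x) * (v x)\<^sup>2 * H (\<psi> n x) \<partial>M)"
    by (simp add: weak_eq_flux[OF test] power2_eq_square mult.assoc)
  finally show ?thesis .
qed

text \<open>Testing the equation with \<open>v\<^sup>2 H(\<psi>\<^sub>n)\<close> and letting \<open>n \<rightarrow> \<infinity>\<close> along an a.e. convergent
  subsequence gives the equation tested with \<open>v\<^sup>2 H(u)\<close>.\<close>

lemma weak_eq_limit:
  assumes v: "test_fun \<Omega> v"
    and H: "\<And>s. (H has_real_derivative H' s) (at s)" "continuous_on UNIV H'"
      "\<And>s. \<bar>H s\<bar> \<le> C" "\<And>s. \<bar>H' s\<bar> \<le> C" "\<And>n. smooth (\<lambda>x. H (\<psi> n x))"
  defines "lhs x \<equiv> 2 * v x * (flux x \<bullet> grad v x) * H (u x) + (v x)\<^sup>2 * (F (g x))\<^sup>2 * H' (u x)"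
    and "rhs x \<equiv> exp (u x) * (v x)\<^sup>2 * H (u x)"
  shows "integrable M lhs" "integrable M rhs" "(\<integral>x. lhs x \<partial>M) = lam * (\<integral>x. rhs x \<partial>M)"
proof -
  have cont_H: "continuous_on UNIV H"
    using H(1) by (meson DERIV_continuous continuous_at_imp_continuous_on)
  obtain r where r: "strict_mono r" "AE x in M. (\<lambda>n. \<psi> (r n) x) \<longlonglongrightarrow> u x"
    using AE_subseq_\<psi>_tendsto .
  note lim = tendsto_integral_mult_comp[OF \<psi>_measurable u_measurable r(2)]
  note coeff = integrable_test_fun_coefficients[OF v]
  show "integrable M lhs"
    unfolding lhs_def using lim(1)[OF cont_H H(3) coeff(1)] lim(1)[OF H(2,4) coeff(2)] by (rule Bochner_Integration.integrable_add)
  show "integrable M rhs"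
    unfolding rhs_def using lim(1)[OF cont_H H(3) coeff(3)] .
  obtain B where "\<And>x. \<bar>v x\<bar> \<le> B"
    using test_fun_bounded[OF v] by blast
  then have "(v x)\<^sup>2 \<le> B\<^sup>2" for x
    using power_mono[of "\<bar>v x\<bar>" B 2] by simp
  then have weight: "\<bar>(v x)\<^sup>2 * H' (\<psi> m x)\<bar> \<le> B\<^sup>2 * C" for m x
    using mult_mono[OF _ H(4)] by (simp add: abs_mult)
  have [measurable]: "v \<in> borel_measurable M" "H' \<in> borel_measurable borel"
    using borel_measurable_test_fun[OF v] borel_measurable_continuous_onI[OF H(2)] .
  have "(\<lambda>n. \<integral>x. (v x)\<^sup>2 * H' (\<psi> n x) * (flux x \<bullet> (grad (\<psi> n) x - g x)) \<partial>M) \<longlonglongrightarrow> 0"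
    by (rule flux_error(2)[where w="\<lambda>n x. (v x)\<^sup>2 * H' (\<psi> n x)", OF _ weight]) measurable
  from LIMSEQ_subseq_LIMSEQ[OF this r(1)]
  have "(\<lambda>n. \<integral>x. (v x)\<^sup>2 * H' (\<psi> (r n) x) * (flux x \<bullet> (grad (\<psi> (r n)) x - g x)) \<partial>M) \<longlonglongrightarrow> 0"
    by (simp add: o_def)
  then have "(\<lambda>n. (\<integral>x. 2 * v x * (flux x \<bullet> grad v x) * H (\<psi> (r n) x) \<partial>M)
      + (\<integral>x. (v x)\<^sup>2 * (F (g x))\<^sup>2 * H' (\<psi> (r n) x) \<partial>M)
      + (\<integral>x. (v x)\<^sup>2 * H' (\<psi> (r n) x) * (flux x \<bullet> (grad (\<psi> (r n)) x - g x)) \<partial>M))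
      \<longlonglongrightarrow> (\<integral>x. 2 * v x * (flux x \<bullet> grad v x) * H (u x) \<partial>M)
        + (\<integral>x. (v x)\<^sup>2 * (F (g x))\<^sup>2 * H' (u x) \<partial>M) + 0"
    by (rule tendsto_add[OF tendsto_add[OF lim(2)[OF cont_H H(3) coeff(1)] lim(2)[OF H(2,4) coeff(2)]]])
  also have "(\<integral>x. 2 * v x * (flux x \<bullet> grad v x) * H (u x) \<partial>M)
      + (\<integral>x. (v x)\<^sup>2 * (F (g x))\<^sup>2 * H' (u x) \<partial>M) + 0 = (\<integral>x. lhs x \<partial>M)"
    unfolding lhs_def using lim(1)[OF cont_H H(3) coeff(1)] lim(1)[OF H(2,4) coeff(2)] by simp
  finally have "(\<lambda>n. (\<integral>x. 2 * v x * (flux x \<bullet> grad v x) * H (\<psi> (r n) x) \<partial>M)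
      + (\<integral>x. (v x)\<^sup>2 * (F (g x))\<^sup>2 * H' (\<psi> (r n) x) \<partial>M)
      + (\<integral>x. (v x)\<^sup>2 * H' (\<psi> (r n) x) * (flux x \<bullet> (grad (\<psi> (r n)) x - g x)) \<partial>M))
      \<longlonglongrightarrow> (\<integral>x. lhs x \<partial>M)" .
  moreover have "(\<lambda>n. lam * (\<integral>x. exp (u x) * (v x)\<^sup>2 * H (\<psi> (r n) x) \<partial>M)) \<longlonglongrightarrow> lam * (\<integral>x. rhs x \<partial>M)"
    unfolding rhs_def by (intro tendsto_mult_left lim(2)[OF cont_H H(3) coeff(3)])
  ultimately show "(\<integral>x. lhs x \<partial>M) = lam * (\<integral>x. rhs x \<partial>M)"
    unfolding weak_eq_square_mult[OF v H(1-4) H(5)] by (rule LIMSEQ_unique)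
qed

end

section \<open>Picone's inequality\<close>

lemma completing_square_le:
  fixes p h a b :: real
  assumes "p > 0"
  shows "2 * h * a * b - p * a\<^sup>2 \<le> (h\<^sup>2 / p) * b\<^sup>2"
proof -
  have "0 \<le> (p * a - h * b)\<^sup>2"
    by simp
  then have "p * (2 * h * a * b - p * a\<^sup>2) \<le> h\<^sup>2 * b\<^sup>2"
    by (simp add: power2_eq_square algebra_simps)
  then show ?thesis
    using assms by (simp add: le_divide_eq mult.commute)
qed

definition picone_weight :: "real \<Rightarrow> real \<Rightarrow> real" where
  "picone_weight c s = 1 / (exp s + c)"

abbreviation picone_weight' :: "real \<Rightarrow> real \<Rightarrow> real" where
  "picone_weight' c s \<equiv> - exp s / (exp s + c)\<^sup>2"

context
  fixes c :: real
  assumes c: "0 < c"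
begin

lemma exp_plus_pos: "0 < exp s + c"
  using c by (simp add: add_pos_pos)

lemma picone_weight_has_real_derivative: "(picone_weight c has_real_derivative picone_weight' c s) (at s)"
  unfolding picone_weight_def[abs_def] using exp_plus_pos[of s]
  by (auto intro!: derivative_eq_intros simp: power2_eq_square)

lemma continuous_on_picone_weight': "continuous_on UNIV (picone_weight' c)"
  using exp_plus_pos by (intro continuous_intros) (metis less_irrefl power_eq_0_iff)

lemma abs_picone_weight_le: "\<bar>picone_weight c s\<bar> \<le> 1 / c"
  using c exp_plus_pos[of s] by (simp add: picone_weight_def frac_le)

lemma abs_picone_weight'_le: "\<bar>picone_weight' c s\<bar> \<le> 1 / c"
proof -
  have "c * exp s \<le> (exp s + c)\<^sup>2"
    using c by (simp add: power2_eq_square algebra_simps add_increasing)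
  then show ?thesis
    using c exp_plus_pos[of s] by (simp add: abs_div divide_le_eq field_simps)
qed

lemma smooth_picone_weight: "smooth f \<Longrightarrow> smooth (\<lambda>x. picone_weight c (f x))"
  unfolding picone_weight_def using exp_plus_pos
  by (intro smooth_inverse smooth_add smooth_const smooth_exp) (auto simp: less_imp_neq[symmetric])

lemma picone_weight_ratio: "(picone_weight c s)\<^sup>2 / (exp s / (exp s + c)\<^sup>2) = exp (- s)"
proof -
  have "(1 / d)\<^sup>2 / (e / d\<^sup>2) = 1 / e" if "d \<noteq> 0" "e \<noteq> 0" for d e :: real
    using that by (simp add: field_simps power2_eq_square)
  from this[of "exp s + c" "exp s"] show ?thesis
    using exp_plus_pos[of s] by (simp add: picone_weight_def exp_minus inverse_eq_divide)
qed

lemma exp_mult_picone_weight_ge: "0 \<le> s \<Longrightarrow> 1 / (1 + c) \<le> exp s * picone_weight c s"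
  using c exp_plus_pos[of s] by (simp add: picone_weight_def divide_simps add_pos_pos algebra_simps)

end

context gelfand_solution
begin

text \<open>Completing the square, with \<open>H = picone_weight c\<close> and \<open>H\<^sup>2 / (-H') = e\<^sup>-\<^sup>s\<close>.\<close>

lemma picone_pointwise:
  assumes c: "0 < c" and u: "0 \<le> u x"
  shows "2 * t * (flux x \<bullet> w) * picone_weight c (u x) + t\<^sup>2 * (F (g x))\<^sup>2 * picone_weight' c (u x)
    \<le> (F w)\<^sup>2"
proof -
  let ?h = "picone_weight c (u x)" and ?p = "exp (u x) / (exp (u x) + c)\<^sup>2" and ?a = "\<bar>t\<bar> * F (g x)"
  have "t * (flux x \<bullet> w) \<le> \<bar>t\<bar> * \<bar>flux x \<bullet> w\<bar>"
    by (metis abs_ge_self abs_mult)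
  also have "\<dots> \<le> ?a * F w"
    using mult_left_mono[OF abs_flux_inner_le, of "\<bar>t\<bar>"] by (simp add: mult.assoc)
  finally have "2 * ?h * (t * (flux x \<bullet> w)) \<le> 2 * ?h * (?a * F w)"
    using exp_plus_pos[OF c, of "u x"] by (intro mult_left_mono) (auto simp: picone_weight_def)
  then have first: "2 * t * (flux x \<bullet> w) * ?h \<le> 2 * ?h * ?a * F w"
    by (simp only: mult_ac)
  have "2 * t * (flux x \<bullet> w) * ?h + t\<^sup>2 * (F (g x))\<^sup>2 * picone_weight' c (u x)
      = 2 * t * (flux x \<bullet> w) * ?h - ?p * ?a\<^sup>2"
    by (simp add: power_mult_distrib)
  also have "\<dots> \<le> 2 * ?h * ?a * F w - ?p * ?a\<^sup>2"
    using first by simp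
  also have "\<dots> \<le> (?h\<^sup>2 / ?p) * (F w)\<^sup>2"
    using exp_plus_pos[OF c, of "u x"] by (intro completing_square_le divide_pos_pos) auto
  also have "\<dots> = exp (- u x) * (F w)\<^sup>2"
    by (simp only: picone_weight_ratio[OF c])
  also have "\<dots> \<le> (F w)\<^sup>2"
    using u by (simp add: mult_left_le_one_le)
  finally show ?thesis .
qed

lemma rayleigh_le_approx:
  assumes v: "test_fun \<Omega> v" and c: "0 < c"
  shows "lam / (1 + c) * (\<integral>x. (v x)\<^sup>2 \<partial>M) \<le> (\<integral>x. (F (grad v x))\<^sup>2 \<partial>M)"
proof -
  note limit = weak_eq_limit[OF v picone_weight_has_real_derivative[OF c]
      continuous_on_picone_weight'[OF c] abs_picone_weight_le[OF c] abs_picone_weight'_le[OF c]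
      smooth_picone_weight[OF c smooth_\<psi>]]
  have "(\<integral>x. lam / (1 + c) * (v x)\<^sup>2 \<partial>M) \<le> (\<integral>x. lam * (exp (u x) * (v x)\<^sup>2 * picone_weight c (u x)) \<partial>M)"
  proof (rule integral_mono_AE)
    show "AE x in M. lam / (1 + c) * (v x)\<^sup>2 \<le> lam * (exp (u x) * (v x)\<^sup>2 * picone_weight c (u x))"
      using AE_u_nonneg
    proof eventually_elim
      case (elim x)
      from mult_left_mono[OF exp_mult_picone_weight_ge[OF c elim], of "lam * (v x)\<^sup>2"] show ?case
        using lam_pos by (simp add: mult_ac)
    qed
  qed (use integrable_test_fun_power2[OF v] limit(2) in auto)
  also have "\<dots> = (\<integral>x. 2 * v x * (flux x \<bullet> grad v x) * picone_weight c (u x)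
      + (v x)\<^sup>2 * (F (g x))\<^sup>2 * picone_weight' c (u x) \<partial>M)"
    using limit(3) by simp
  also have "\<dots> \<le> (\<integral>x. (F (grad v x))\<^sup>2 \<partial>M)"
  proof (rule integral_mono_AE)
    show "AE x in M. 2 * v x * (flux x \<bullet> grad v x) * picone_weight c (u x)
        + (v x)\<^sup>2 * (F (g x))\<^sup>2 * picone_weight' c (u x) \<le> (F (grad v x))\<^sup>2"
      using AE_u_nonneg by eventually_elim (rule picone_pointwise[OF c])
    show "integrable M (\<lambda>x. (F (grad v x))\<^sup>2)"
      using integrable_power2_comp[OF borel_measurable_grad_test_fun integrable_norm_grad_test_fun_power2, OF v v] .
  qed (use limit(1) in auto)
  finally show ?thesis
    by simp
qed

lemma rayleigh_le:
  assumes "test_fun \<Omega> v"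
  shows "lam * (\<integral>x. (v x)\<^sup>2 \<partial>M) \<le> (\<integral>x. (F (grad v x))\<^sup>2 \<partial>M)"
proof (rule tendsto_upperbound)
  show "((\<lambda>c. lam / (1 + c) * (\<integral>x. (v x)\<^sup>2 \<partial>M)) \<longlongrightarrow> lam * (\<integral>x. (v x)\<^sup>2 \<partial>M)) (at_right 0)"
    by (auto intro!: tendsto_eq_intros)
  show "\<forall>\<^sub>F c in at_right 0. lam / (1 + c) * (\<integral>x. (v x)\<^sup>2 \<partial>M) \<le> (\<integral>x. (F (grad v x))\<^sup>2 \<partial>M)"
    using eventually_at_right_less[of 0] by eventually_elim (rule rayleigh_le_approx[OF assms])
qed simp

end

lemma finsler_admissibleE:
  assumes "finsler_admissible F"
  obtains b where "bounded_finsler_norm F b" "\<And>\<xi>. \<xi> \<noteq> 0 \<Longrightarrow> F differentiable (at \<xi>)"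
    "continuous_on (- {0}) (grad F)"
proof -
  obtain b where "\<And>\<xi>. F \<xi> \<le> b * norm \<xi>"
    using assms unfolding finsler_admissible_def by blast
  then have "bounded_finsler_norm F b"
    using assms unfolding finsler_admissible_def by unfold_locales blast+
  moreover have "continuous_on (- {0}) (pd i F)" for i
    by (rule continuous_at_imp_continuous_on)
      (use assms in \<open>auto simp: finsler_admissible_def intro: differentiable_imp_continuous_within\<close>)
  then have "continuous_on (- {0}) (grad F)"
    unfolding grad_def by (rule continuous_on_vec_lambda)
  ultimately show thesis
    using assms that unfolding finsler_admissible_def by blast
qed

lemma weak_solution_rayleigh_le:
  assumes "open \<Omega>" "bounded \<Omega>" "bounded_finsler_norm F b"
    and "\<And>\<xi>. \<xi> \<noteq> 0 \<Longrightarrow> F differentiable (at \<xi>)" "continuous_on (- {0}) (grad F)"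
    and "weak_solution F \<Omega> lam u" "test_fun \<Omega> v"
  shows "lam * (LINT x:\<Omega>|lebesgue. (v x)\<^sup>2) \<le> (LINT x:\<Omega>|lebesgue. (F (grad v x))\<^sup>2)"
proof -
  interpret bounded_domain \<Omega>
    using assms(1,2) by unfold_locales
  show ?thesis
  proof (cases "0 < lam")
    case False
    have "lam * (\<integral>x. (v x)\<^sup>2 \<partial>M) \<le> 0"
      using False by (simp add: mult_nonpos_nonneg)
    also have "0 \<le> (\<integral>x. (F (grad v x))\<^sup>2 \<partial>M)"
      by simp
    finally show ?thesis
      by (simp add: set_lebesgue_integral_eq_restrict)
  next
    case True
    obtain g where W: "W012 \<Omega> u g"
      and exp_u: "\<And>K. compact K \<and> K \<subseteq> \<Omega> \<longrightarrow> set_integrable lebesgue K (\<lambda>x. exp (u x))"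
      and eq: "\<And>\<phi>. test_fun \<Omega> \<phi> \<longrightarrow>
        (LINT x:\<Omega>|lebesgue. F (g x) * frechet_derivative F (at (g x)) (grad \<phi> x))
          = lam * (LINT x:\<Omega>|lebesgue. exp (u x) * \<phi> x)"
      using assms(6) unfolding weak_solution_def by blast
    obtain \<psi> where "W012_approx \<Omega> u g \<psi>"
      using W012_approx_exists[OF W] .
    then interpret gelfand_solution \<Omega> u g \<psi> F b lam
      using assms(3-5) True exp_u eq
      by (intro gelfand_solution.intro gelfand_solution_axioms.intro) (auto simp: set_lebesgue_integral_eq_restrict)
    show ?thesis
      using rayleigh_le[OF assms(7)] by (simp add: set_lebesgue_integral_eq_restrict)
  qed
qed

lemma lambda1_greatest:
  assumes "open \<Omega>" "bounded \<Omega>" "\<Omega> \<noteq> {}" "bounded_finsler_norm F b"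
    and rayleigh: "\<And>v. test_fun \<Omega> v \<Longrightarrow>
      lam * (LINT x:\<Omega>|lebesgue. (v x)\<^sup>2) \<le> (LINT x:\<Omega>|lebesgue. (F (grad v x))\<^sup>2)"
  shows "lam \<le> lambda1 F \<Omega>"
  unfolding lambda1_def
proof (rule cInf_greatest)
  interpret bounded_domain \<Omega>
    using assms(1,2) by unfold_locales
  obtain v where "test_fun \<Omega> v" "(LINT x:\<Omega>|lebesgue. (v x)\<^sup>2) \<noteq> 0"
    using exists_test_fun_nonzero[OF assms(3)] .
  then show "{(LINT x:\<Omega>|lebesgue. (F (g x))\<^sup>2) / (LINT x:\<Omega>|lebesgue. (u x)\<^sup>2) | u g.
      W012 \<Omega> u g \<and> (LINT x:\<Omega>|lebesgue. (u x)\<^sup>2) \<noteq> 0} \<noteq> {}"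
    using W012_test_fun by blast
  fix s
  assume "s \<in> {(LINT x:\<Omega>|lebesgue. (F (g x))\<^sup>2) / (LINT x:\<Omega>|lebesgue. (u x)\<^sup>2) | u g.
      W012 \<Omega> u g \<and> (LINT x:\<Omega>|lebesgue. (u x)\<^sup>2) \<noteq> 0}"
  then obtain w gw where W: "W012 \<Omega> w gw" and nonzero: "(\<integral>x. (w x)\<^sup>2 \<partial>M) \<noteq> 0"
    and s: "s = (\<integral>x. (F (gw x))\<^sup>2 \<partial>M) / (\<integral>x. (w x)\<^sup>2 \<partial>M)"
    by (auto simp: set_lebesgue_integral_eq_restrict)
  obtain \<psi> where "W012_approx \<Omega> w gw \<psi>"
    using W012_approx_exists[OF W] .
  then interpret W012_approx \<Omega> w gw \<psi> .
  have "lam * (\<integral>x. (\<psi> k x)\<^sup>2 \<partial>M) \<le> (\<integral>x. (F (grad (\<psi> k) x))\<^sup>2 \<partial>M)" for k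
    using rayleigh[OF test_fun_\<psi>] by (simp add: set_lebesgue_integral_eq_restrict)
  then have "lam * (\<integral>x. (w x)\<^sup>2 \<partial>M) \<le> (\<integral>x. (F (gw x))\<^sup>2 \<partial>M)"
    by (intro LIMSEQ_le[OF tendsto_mult_left[OF tendsto_integral_\<psi>_power2]
          tendsto_integral_F_grad_\<psi>_power2[OF assms(4)]]) auto
  moreover have "0 < (\<integral>x. (w x)\<^sup>2 \<partial>M)"
    using nonzero by (simp add: order_less_le)
  ultimately show "lam \<le> s"
    by (simp add: s pos_le_divide_eq)
qed

theorem theorem1p2:
  fixes F :: "real^'n::finite \<Rightarrow> real" and \<Omega> :: "(real^'n) set" and lam :: real
  assumes "CARD('n) \<ge> 2"
    and "open \<Omega>" and "connected \<Omega>" and "bounded \<Omega>" and "\<Omega> \<noteq> {}"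
    and "finsler_admissible F"
    and "lam > lambda1 F \<Omega>"
  shows "\<not> (\<exists>u. weak_solution F \<Omega> lam u)"
proof
  assume "\<exists>u. weak_solution F \<Omega> lam u"
  then obtain u where u: "weak_solution F \<Omega> lam u" ..
  obtain b where F: "bounded_finsler_norm F b" "\<And>\<xi>. \<xi> \<noteq> 0 \<Longrightarrow> F differentiable (at \<xi>)"
    "continuous_on (- {0}) (grad F)"
    using finsler_admissibleE[OF assms(6)] by blast
  have "lam \<le> lambda1 F \<Omega>"
    using assms(2,4,5) F(1) weak_solution_rayleigh_le[OF assms(2,4) F u] by (rule lambda1_greatest)
  with assms(7) show False
    by simp
qed

end
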